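(* Let $d=1$, fix $y\in\mathbb{R}$ and measurable $g:\mathbb{R}\to\mathbb{R}$. Let $X,V$ be independent real random variables, $Y=X+V$, where $P_V$ has a Lebesgue density $f_V\in C_0^1(\mathbb{R};\mathbb{R})$ and $\varphi_V(\omega)\neq0$ for Lebesgue-a.e. $\omega$. Assume $\lambda_{g,V,y}(x)=g(x)f_V(y-x)\in\Xi^0(\mathbb{R};\mathbb{C})$ and $\widetilde{\lambda}_{g,V,y}\in L^1(\mathbb{R};\mathbb{C})$. Suppose there are $c_{g,V,y}\in\mathbb{C}$ and measurable $k_{g,V,y}:(0,\infty)\to\mathbb{C}$ with $\int_0^1t|k_{g,V,y}(t)|dt<\infty$, $\int_1^\infty|k_{g,V,y}(t)|dt<\infty$, and \[ \mathcal{Q}_{g,V,y}(\omega)=e^{i\omega y}\Bigl(-i\pi c_{g,V,y}\operatorname{sgn}(\omega)+\int_0^\infty(e^{-i\omega t}-e^{i\omega t})k_{g,V,y}(t)\,dt\Bigr)\quad\text{for Lebesgue-a.e. }\omega. \] Then for every $f\in\mathcal{A}_V(\mathbb{R})$, \[ \mathcal{T}_{g,V,y}[f]=\pi c_{g,V,y}\mathcal{H}[f](y)+\int_0^\infty\bigl(f(y-t)-f(y+t)\bigr)k_{g,V,y}(t)\,dt, \] and in particular, whenever $f_Y(y)>0$, \[ \mathbb{E}[g(X)\mid Y=y]=\frac{1}{f_Y(y)}\Bigl\{\pi c_{g,V,y}\mathcal{H}[f_Y](y)+\int_0^\infty\bigl(f_Y(y-t)-f_Y(y+t)\bigr)k_{g,V,y}(t)\,dt\Bigr\}.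 \]
   Context: $\widetilde\psi(\omega)=\int e^{i\omega x}\psi(x)dx$; $\varphi_V(\omega)=\mathbb{E}[e^{i\omega V}]$. $C_0^1$: $C^1$ functions with the function and derivative vanishing at infinity; $\Xi^0=C_0\cap L^1$. $\mathcal{Q}_{g,V,y}(\omega)=\widetilde{\lambda}_{g,V,y}(\omega)/\varphi_V(-\omega)$ where $\varphi_V(-\omega)\ne0$, and $0$ otherwise. Hilbert transform: $\mathcal{H}[f](y)=\frac1\pi\lim_{\varepsilon\downarrow0}\int_{|t|>\varepsilon}\frac{f(y-t)}{t}\,dt$. $\mathcal{A}_V(\mathbb{R})=\{f_V*\mu:\mu\text{ finite signed Radon measure}\}$ with $\|f_V*\mu\|_{\mathcal{A}_V}=\|\mu\|_{TV}$; $\mathcal{T}_{g,V,y}$ is the unique continuous linear functional on $\mathcal{A}_V$ with $\mathcal{T}_{g,V,y}[f_V*\mu]=\int\lambda_{g,V,y}\,d\mu$. $f_Y=f_V*P_X$ and $\mathbb{E}[g(X)\mid Y=y]=f_Y(y)^{-1}\int g(x)f_V(y-x)dP_X(x)$. *)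

theory Defs
  imports "HOL-Probability.Probability"
begin

definition C0_1 :: "(real \<Rightarrow> real) \<Rightarrow> bool" where
  "C0_1 f \<longleftrightarrow> (\<exists>f'. (\<forall>x. (f has_real_derivative f' x) (at x)) \<and> continuous_on UNIV f'
      \<and> (f \<longlongrightarrow> 0) at_infinity \<and> (f' \<longlongrightarrow> 0) at_infinity)"

definition Xi0 :: "(real \<Rightarrow> complex) \<Rightarrow> bool" where
  "Xi0 h \<longleftrightarrow> continuous_on UNIV h \<and> (h \<longlongrightarrow> 0) at_infinity \<and> integrable lborel h"

definition fourier :: "(real \<Rightarrow> complex) \<Rightarrow> real \<Rightarrow> complex" where
  "fourier \<psi> \<omega> = (CLINT x|lborel. iexp (\<omega> * x) * \<psi> x)"

definition lam :: "(real \<Rightarrow> real) \<Rightarrow> (real \<Rightarrow> real) \<Rightarrow> real \<Rightarrow> real \<Rightarrow> complex" where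
  "lam g fV y x = complex_of_real (g x * fV (y - x))"

definition Q :: "(real \<Rightarrow> real) \<Rightarrow> (real \<Rightarrow> real) \<Rightarrow> real measure \<Rightarrow> real \<Rightarrow> real \<Rightarrow> complex" where
  "Q g fV PV y \<omega> = (if char PV (- \<omega>) \<noteq> 0 then fourier (lam g fV y) \<omega> / char PV (- \<omega>) else 0)"

definition hilbert :: "(real \<Rightarrow> real) \<Rightarrow> real \<Rightarrow> real" where
  "hilbert f y = (1 / pi) * Lim (at_right 0) (\<lambda>\<epsilon>. LINT t:{t. \<epsilon> < \<bar>t\<bar>}|lborel. f (y - t) / t)"

definition conv_meas :: "(real \<Rightarrow> real) \<Rightarrow> real measure \<Rightarrow> real \<Rightarrow> real" where
  "conv_meas fV \<mu> x = (\<integral>z. fV (x - z) \<partial>\<mu>)"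

text \<open>E[g(X) | Y = y] := f_Y(y)^{-1} int g(x) f_V(y - x) dP_X(x), with f_Y = f_V * P_X.\<close>
definition cond_exp_at :: "(real \<Rightarrow> real) \<Rightarrow> (real \<Rightarrow> real) \<Rightarrow> real measure \<Rightarrow> real \<Rightarrow> real" where
  "cond_exp_at g fV PX y = (\<integral>x. g x * fV (y - x) \<partial>PX) / conv_meas fV PX y"

end

theory Submission
  imports Defs
begin

(* Abel-Poisson summation of the Fourier inversion formula for lambda = lambda_{g,V,y}.
   For e > 0, integrating lambda~(w) against the Abel factor exp(-i w z - e |w|) gives, by Fubini,
   2 pi times the Poisson average of lambda at z, which tends to lambda(z) as e -> 0.  On the other
   hand lambda~(w) = Q(w) phi_V(-w) almost everywhere, and exp(-e|w|) and exp(-e|w|) sgn w are,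
   up to constants, the Fourier transforms of the Poisson kernel and of the conjugate Poisson
   kernel.  Hence the c-term of Q becomes c times the conjugate Poisson integral of f_V at y - z,
   and the k-term becomes the k-integral of the Poisson smoothing of f_V.  Since f_V is bounded,
   integrable and Lipschitz, dominated convergence as e -> 0 yields the pointwise identity
     lambda(z) = c * int_0^oo (f_V(y-z-s) - f_V(y-z+s)) / s ds
                 + int_0^oo (f_V(y-z-t) - f_V(y-z+t)) k(t) dt.
   Integrating it against mu1 - mu2 and exchanging the integrals gives the same identity for
   f = f_V * (mu1 - mu2) in place of f_V, and for such f the first integral is absolutely
   convergent and equals pi H[f](y). *)

section \<open>Fourier transform of the Abel factor\<close>

lemma
  fixes z :: complex assumes z: "0 < Re z"
  shows set_integrable_exp_neg_I0i: "set_integrable lborel {0<..} (\<lambda>w. exp (- (z * of_real w)))"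
    and set_integral_exp_neg_I0i: "(LINT w:{0<..}|lborel. exp (- (z * of_real w))) = 1 / z"
proof -
  have "set_integrable lborel {0<..} (\<lambda>w. exp (-(w * Re z)))"
    using integrable_I0i_exp_mscale[OF z] .
  then show int: "set_integrable lborel {0<..} (\<lambda>w. exp (- (z * of_real w)))"
    unfolding set_integrable_def
    by (rule Bochner_Integration.integrable_bound) (auto simp: indicator_def mult.commute)
  let ?F = "\<lambda>w::real. - exp (- (z * of_real w)) / z"
  have z0: "z \<noteq> 0" using z by auto
  have "(LINT w=0..\<infinity>|lborel. exp (- (z * of_real w))) = 0 - (- 1 / z)"
  proof (rule interval_integral_FTC_integrable)
    show "(?F has_vector_derivative exp (- (z * of_real x))) (at x)" for x
    proof (rule has_vector_derivative_real_field)
      show "((\<lambda>\<zeta>. - exp (- (z * \<zeta>)) / z) has_field_derivative exp (- (z * of_real x))) (at (of_real x))"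
        using z0 by (auto intro!: derivative_eq_intros)
    qed
    show "set_integrable lborel (einterval 0 \<infinity>) (\<lambda>w. exp (- (z * of_real w)))"
      using int by (simp add: zero_ereal_def)
    show "((?F \<circ> real_of_ereal) \<longlongrightarrow> - 1 / z) (at_right 0)"
      using z0 by (auto simp: zero_ereal_def ereal_tendsto_simps intro!: tendsto_eq_intros)
    have "(?F \<longlongrightarrow> 0) at_top"
    proof -
      have "((\<lambda>w. exp (- (Re z * w)) / norm z) \<longlongrightarrow> 0 / norm z) at_top"
        using z by (intro tendsto_intros exp_at_bot[THEN filterlim_compose])
          (auto intro!: filterlim_tendsto_pos_mult_at_top filterlim_ident simp: filterlim_uminus_at_bot)
      then show ?thesis by (subst tendsto_norm_zero_iff[symmetric]) (simp add: norm_divide)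
    qed
    then show "((?F \<circ> real_of_ereal) \<longlongrightarrow> 0) (at_left \<infinity>)"
      unfolding ereal_tendsto_simps by (simp add: comp_def)
  qed auto
  then show "(LINT w:{0<..}|lborel. exp (- (z * of_real w))) = 1 / z"
    by (simp add: interval_lebesgue_integral_0_infty)
qed

lemma
  fixes G :: "real \<Rightarrow> 'b::{banach, second_countable_topology}"
  assumes A: "set_integrable lborel {0<..} G" and B: "set_integrable lborel {0<..} (\<lambda>w. G (-w))"
  shows integrable_lborel_of_I0i: "integrable lborel G"
    and integral_lborel_eq_I0i_sum: "(\<integral>w. G w \<partial>lborel) = (LINT w:{0<..}|lborel. G w + G (-w))"
proof -
  define Bf where "Bf = (\<lambda>w. indicator {..<0} w *\<^sub>R G w)"
  have Bm: "(\<lambda>x. Bf (0 + (-1) * x)) = (\<lambda>x. indicator {0<..} x *\<^sub>R G (-x))"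
    by (auto simp: Bf_def indicator_def fun_eq_iff)
  have iA: "integrable lborel (\<lambda>w. indicator {0<..} w *\<^sub>R G w)"
    using A by (simp add: set_integrable_def)
  have iB': "integrable lborel (\<lambda>x. indicator {0<..} x *\<^sub>R G (-x))"
    using B by (simp add: set_integrable_def)
  have iB: "integrable lborel Bf"
    using lborel_integrable_real_affine_iff[of "-1" Bf 0] iB' Bm by simp
  have eqG: "G = (\<lambda>w. indicator {0<..} w *\<^sub>R G w + Bf w + indicator {0} w *\<^sub>R G 0)"
    by (auto simp: Bf_def indicator_def fun_eq_iff)
  have i0: "integrable lborel (\<lambda>w. indicator {0::real} w *\<^sub>R G 0)"
    by (intro integrable_scaleR_left integrable_real_indicator) auto
  have iAB: "integrable lborel (\<lambda>w. indicator {0<..} w *\<^sub>R G w + Bf w)"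
    using iA iB by simp
  show iG: "integrable lborel G"
    by (subst eqG) (use iAB i0 in simp)
  have ae: "AE w in lborel. G w = indicator {0<..} w *\<^sub>R G w + Bf w"
    using AE_lborel_singleton[of 0] by eventually_elim (auto simp: Bf_def indicator_def)
  have "(\<integral>w. G w \<partial>lborel) = (\<integral>w. indicator {0<..} w *\<^sub>R G w + Bf w \<partial>lborel)"
    by (rule integral_cong_AE) (use iG iAB ae in auto)
  also have "\<dots> = (\<integral>w. indicator {0<..} w *\<^sub>R G w \<partial>lborel) + (\<integral>w. Bf w \<partial>lborel)"
    using iA iB by simp
  also have "(\<integral>w. Bf w \<partial>lborel) = (\<integral>x. indicator {0<..} x *\<^sub>R G (-x) \<partial>lborel)"
    using lborel_integral_real_affine[of "-1" Bf 0] Bm by simp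
  also have "(\<integral>w. indicator {0<..} w *\<^sub>R G w \<partial>lborel) + (\<integral>x. indicator {0<..} x *\<^sub>R G (-x) \<partial>lborel)
      = (LINT w:{0<..}|lborel. G w + G (-w))"
    using iA iB' by (simp add: set_lebesgue_integral_def scaleR_add_right)
  finally show "(\<integral>w. G w \<partial>lborel) = (LINT w:{0<..}|lborel. G w + G (-w))" .
qed

lemma integral_lborel_eq_I0i_sum':
  fixes G :: "real \<Rightarrow> 'b::{banach, second_countable_topology}"
  assumes G: "integrable lborel G"
  shows "(\<integral>w. G w \<partial>lborel) = (LINT w:{0<..}|lborel. G w + G (- w))"
proof (rule integral_lborel_eq_I0i_sum)
  have "integrable lborel (\<lambda>w. G (- w))"
    using lborel_integrable_real_affine[OF G, of "-1" 0] by simp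
  then show "set_integrable lborel {0<..} G" "set_integrable lborel {0<..} (\<lambda>w. G (- w))"
    using G unfolding set_integrable_def by (auto intro: integrable_mult_indicator)
qed

lemma iexp_add: "iexp a * iexp b = iexp (a + b)"
  by (simp add: exp_add[symmetric] distrib_left)

lemma iexp_times_exp_neg:
  "iexp (w * u) * complex_of_real (exp (- (e * w))) = exp (- ((complex_of_real e - \<i> * complex_of_real u) * w))"
proof -
  have "iexp (w * u) * complex_of_real (exp (- (e * w))) = exp (\<i> * complex_of_real (w * u) + complex_of_real (- (e * w)))"
    by (simp only: exp_add exp_of_real)
  also have "\<i> * complex_of_real (w * u) + complex_of_real (- (e * w)) = - ((complex_of_real e - \<i> * complex_of_real u) * w)"
    by (simp add: algebra_simps)
  finally show ?thesis .
qed

lemma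
  fixes e u :: real assumes e: "0 < e"
  shows integrable_fourier_exp_neg_abs:
      "integrable lborel (\<lambda>w. iexp (w * u) * complex_of_real (exp (- (e * \<bar>w\<bar>))))"
    and fourier_exp_neg_abs:
      "(\<integral>w. iexp (w * u) * complex_of_real (exp (- (e * \<bar>w\<bar>))) \<partial>lborel) = complex_of_real (2 * e / (e\<^sup>2 + u\<^sup>2))"
    and fourier_exp_neg_abs_sgn:
      "(\<integral>w. iexp (w * u) * complex_of_real (exp (- (e * \<bar>w\<bar>)) * sgn w) \<partial>lborel) = \<i> * complex_of_real (2 * u / (e\<^sup>2 + u\<^sup>2))"
proof -
  define z1 z2 where "z1 = complex_of_real e - \<i> * complex_of_real u" and "z2 = complex_of_real e - \<i> * complex_of_real (- u)"
  have z: "0 < Re z1" "0 < Re z2" using e by (simp_all add: z1_def z2_def)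
  note I1 = set_integrable_exp_neg_I0i[OF z(1)] set_integral_exp_neg_I0i[OF z(1)]
    and I2 = set_integrable_exp_neg_I0i[OF z(2)] set_integral_exp_neg_I0i[OF z(2)]
  let ?G = "\<lambda>w. iexp (w * u) * complex_of_real (exp (- (e * \<bar>w\<bar>)))"
  let ?S = "\<lambda>w. iexp (w * u) * complex_of_real (exp (- (e * \<bar>w\<bar>)) * sgn w)"
  have pos: "?G w = exp (- (z1 * complex_of_real w))" "?G (- w) = exp (- (z2 * complex_of_real w))" 
    "?S w = exp (- (z1 * complex_of_real w))" "?S (- w) = - exp (- (z2 * complex_of_real w))" if "0 < w" for w
    using that iexp_times_exp_neg[of w u e] iexp_times_exp_neg[of w "- u" e]
    by (simp_all only: z1_def z2_def abs_minus_cancel abs_of_pos sgn_minus sgn_pos mult_1_right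
        mult_minus_right mult_minus_left of_real_minus)
  have neg: "set_integrable lborel {0<..} (\<lambda>w. - exp (- (z2 * complex_of_real w)))"
    using set_integrable_mult_right[OF I2(1), of "-1"] by simp
  have cong: "set_integrable lborel {0<..} f"
    if "set_integrable lborel {0<..} h" "\<And>w. 0 < w \<Longrightarrow> f w = h w" for f h :: "real \<Rightarrow> complex"
    using that by (subst set_integrable_cong[OF refl refl, of _ _ h]) auto
  have G: "set_integrable lborel {0<..} ?G" "set_integrable lborel {0<..} (\<lambda>w. ?G (- w))"
    and S: "set_integrable lborel {0<..} ?S" "set_integrable lborel {0<..} (\<lambda>w. ?S (- w))"
    by (rule cong, (fact I1(1) I2(1) neg)+, rule pos, assumption)+
  show "integrable lborel ?G"
    using integrable_lborel_of_I0i G by blast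
  have nz: "z1 \<noteq> 0" "z2 \<noteq> 0" using z by auto
  have z1z2: "z1 * z2 = complex_of_real (e\<^sup>2 + u\<^sup>2)"
    by (simp add: z1_def z2_def algebra_simps power2_eq_square)
  have "(\<integral>w. ?G w \<partial>lborel) = (LINT w:{0<..}|lborel. exp (- (z1 * complex_of_real w)) + exp (- (z2 * complex_of_real w)))"
    unfolding integral_lborel_eq_I0i_sum[OF G] by (rule set_lebesgue_integral_cong) (simp, intro allI impI, simp only: pos greaterThan_iff)
  also have "\<dots> = 1 / z1 + 1 / z2"
    using I1 I2 by simp
  also have "\<dots> = (z1 + z2) / (z1 * z2)"
    using nz by (simp add: field_simps)
  also have "\<dots> = complex_of_real (2 * e / (e\<^sup>2 + u\<^sup>2))"
    unfolding z1z2 by (simp add: z1_def z2_def)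
  finally show "(\<integral>w. ?G w \<partial>lborel) = complex_of_real (2 * e / (e\<^sup>2 + u\<^sup>2))" .
  have "(\<integral>w. ?S w \<partial>lborel) = (LINT w:{0<..}|lborel. exp (- (z1 * complex_of_real w)) - exp (- (z2 * complex_of_real w)))"
    unfolding integral_lborel_eq_I0i_sum[OF S] by (rule set_lebesgue_integral_cong) (simp, intro allI impI, simp only: pos greaterThan_iff diff_conv_add_uminus)
  also have "\<dots> = 1 / z1 - 1 / z2"
    using I1 I2 by simp
  also have "\<dots> = (z2 - z1) / (z1 * z2)"
    using nz by (simp add: field_simps)
  also have "\<dots> = \<i> * complex_of_real (2 * u / (e\<^sup>2 + u\<^sup>2))"
    unfolding z1z2 by (simp add: z1_def z2_def)
  finally show "(\<integral>w. ?S w \<partial>lborel) = \<i> * complex_of_real (2 * u / (e\<^sup>2 + u\<^sup>2))" .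
qed

lemma integrable_exp_neg_abs:
  fixes e :: real assumes "0 < e"
  shows "integrable lborel (\<lambda>w. exp (- (e * \<bar>w\<bar>)))"
  using integrable_norm[OF integrable_fourier_exp_neg_abs[OF assms, of 0]] by simp

section \<open>The Poisson kernel\<close>

definition poisson_kernel :: "real \<Rightarrow> real \<Rightarrow> real" where
  "poisson_kernel e u = e / (pi * (u^2 + e^2))"

lemma poisson_kernel_nonneg: "0 < e \<Longrightarrow> 0 \<le> poisson_kernel e u"
  by (simp add: poisson_kernel_def add_pos_nonneg less_imp_le)

lemma poisson_kernel_minus: "poisson_kernel e (-u) = poisson_kernel e u" by (simp add: poisson_kernel_def)

lemma borel_measurable_poisson_kernel[measurable]: "poisson_kernel e \<in> borel_measurable borel"
  unfolding poisson_kernel_def by measurable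

lemma
  shows integrable_cauchy_density: "integrable lborel (\<lambda>s. 1 / (pi * (1 + s^2)))"
    and integral_cauchy_density: "(\<integral>s. 1 / (pi * (1 + s^2)) \<partial>lborel) = 1"
proof -
  have i: "integrable lborel (\<lambda>x::real. inverse (1 + x^2))"
  proof -
    have "einterval (-\<infinity>) \<infinity> = (UNIV::real set)" by (auto simp: einterval_def)
    then show ?thesis using integrable_inverse_1_plus_square by (simp add: set_integrable_def)
  qed
  have v: "(\<integral>x. inverse (1 + (x::real)^2) \<partial>lborel) = pi"
    using LBINT_inverse_1_plus_square by (simp add: interval_lebesgue_integral_def set_lebesgue_integral_def)
  have eq: "(\<lambda>s. 1 / (pi * (1 + s^2))) = (\<lambda>s. inverse (1 + s^2) / pi)"
    by (simp add: fun_eq_iff divide_simps)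
  show "integrable lborel (\<lambda>s. 1 / (pi * (1 + s^2)))" unfolding eq using i by simp
  show "(\<integral>s. 1 / (pi * (1 + s^2)) \<partial>lborel) = 1" unfolding eq using v by simp
qed

lemma two_pi_poisson_kernel: "2 * pi * poisson_kernel e u = 2 * e / (e\<^sup>2 + u\<^sup>2)"
  by (simp add: poisson_kernel_def add.commute)

lemma poisson_kernel_scale: assumes e: "0 < e" shows "e * poisson_kernel e (e * s) = 1 / (pi * (1 + s^2))"
proof -
  have a: "(e * s)^2 + e^2 = e^2 * (1 + s^2)" by (simp add: algebra_simps power2_eq_square)
  have b: "1 + s^2 > 0" by (simp add: add_pos_nonneg)
  show ?thesis unfolding poisson_kernel_def a using e b by (simp add: power2_eq_square)
qed

lemma
  assumes e: "0 < e"
  shows integrable_poisson_kernel: "integrable lborel (poisson_kernel e)"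
    and integral_poisson_kernel: "(\<integral>x. poisson_kernel e x \<partial>lborel) = 1"
proof -
  have eq: "(\<lambda>s. poisson_kernel e (0 + e * s)) = (\<lambda>s. (1/e) * (1 / (pi * (1 + s^2))))"
  proof
    fix s
    have "poisson_kernel e (0 + e * s) = (1/e) * (e * poisson_kernel e (e * s))" using e by simp
    then show "poisson_kernel e (0 + e * s) = (1/e) * (1 / (pi * (1 + s^2)))" using poisson_kernel_scale[OF e, of s] by simp
  qed
  have "integrable lborel (\<lambda>s. poisson_kernel e (0 + e * s))"
    unfolding eq using integrable_mult_right[OF integrable_cauchy_density, of "1/e"] by simp
  then show "integrable lborel (poisson_kernel e)"
    using lborel_integrable_real_affine_iff[of e "poisson_kernel e" 0] e by simp
  have "(\<integral>x. poisson_kernel e x \<partial>lborel) = \<bar>e\<bar> *\<^sub>R (\<integral>s. poisson_kernel e (0 + e * s) \<partial>lborel)"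
    using lborel_integral_real_affine[of e "poisson_kernel e" 0] e by simp
  also have "\<dots> = 1" unfolding eq integral_mult_right_zero using integral_cauchy_density e by simp
  finally show "(\<integral>x. poisson_kernel e x \<partial>lborel) = 1" .
qed

lemma poisson_kernel_approx_identity:
  fixes h :: "real \<Rightarrow> 'b::{banach, second_countable_topology}"
  assumes hm: "h \<in> borel_measurable borel" and hb: "\<And>x. norm (h x) \<le> B"
    and hc: "isCont h u"
    and ep: "\<And>n. 0 < e n" and el: "e \<longlonglongrightarrow> 0"
  shows "(\<lambda>n. \<integral>x. poisson_kernel (e n) (x - u) *\<^sub>R h x \<partial>lborel) \<longlonglongrightarrow> h u"
proof -
  have eq: "(\<integral>x. poisson_kernel (e n) (x - u) *\<^sub>R h x \<partial>lborel) = (\<integral>s. (1 / (pi * (1 + s^2))) *\<^sub>R h (u + e n * s) \<partial>lborel)" for n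
  proof -
    have "(\<integral>x. poisson_kernel (e n) (x - u) *\<^sub>R h x \<partial>lborel) = \<bar>e n\<bar> *\<^sub>R (\<integral>s. poisson_kernel (e n) (u + e n * s - u) *\<^sub>R h (u + e n * s) \<partial>lborel)"
      using lborel_integral_real_affine[of "e n" "\<lambda>x. poisson_kernel (e n) (x - u) *\<^sub>R h x" u] ep[of n] by simp
    also have "\<dots> = (\<integral>s. (e n * poisson_kernel (e n) (e n * s)) *\<^sub>R h (u + e n * s) \<partial>lborel)"
      using ep[of n] by (simp add: integral_scaleR_right[symmetric] del: integral_scaleR_right)
    also have "\<dots> = (\<integral>s. (1 / (pi * (1 + s^2))) *\<^sub>R h (u + e n * s) \<partial>lborel)"
      using poisson_kernel_scale[OF ep[of n]] by simp
    finally show ?thesis .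
  qed
  have "(\<lambda>n. \<integral>s. (1 / (pi * (1 + s^2))) *\<^sub>R h (u + e n * s) \<partial>lborel) \<longlonglongrightarrow> (\<integral>s. (1 / (pi * (1 + s^2))) *\<^sub>R h u \<partial>lborel)"
  proof (rule integral_dominated_convergence[where w="\<lambda>s. B * (1 / (pi * (1 + s^2)))"])
    show "integrable lborel (\<lambda>s. B * (1 / (pi * (1 + s^2))))"
      using integrable_mult_right[OF integrable_cauchy_density, of B] .
    show "AE s in lborel. (\<lambda>n. (1 / (pi * (1 + s^2))) *\<^sub>R h (u + e n * s)) \<longlonglongrightarrow> (1 / (pi * (1 + s^2))) *\<^sub>R h u"
    proof (intro AE_I2 tendsto_scaleR tendsto_const)
      fix s :: real
      have "(\<lambda>n. u + e n * s) \<longlonglongrightarrow> u + 0 * s"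
        by (intro tendsto_intros el)
      then show "(\<lambda>n. h (u + e n * s)) \<longlonglongrightarrow> h u"
        using isCont_tendsto_compose[OF hc] by simp
    qed
    show "AE s in lborel. norm ((1 / (pi * (1 + s^2))) *\<^sub>R h (u + e n * s)) \<le> B * (1 / (pi * (1 + s^2)))" for n
    proof (intro AE_I2)
      fix s :: real
      have p: "0 \<le> 1 / (pi * (1 + s^2))" by (simp add: add_pos_nonneg)
      show "norm ((1 / (pi * (1 + s^2))) *\<^sub>R h (u + e n * s)) \<le> B * (1 / (pi * (1 + s^2)))"
        using mult_right_mono[OF hb[of "u + e n * s"] p] p by (simp add: mult.commute)
    qed
  qed (use hm in auto)
  also have "(\<integral>s. (1 / (pi * (1 + s^2))) *\<^sub>R h u \<partial>lborel) = h u"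
    by (subst integral_scaleR_left) (simp_all add: integrable_cauchy_density integral_cauchy_density)
  finally show ?thesis unfolding eq .
qed

lemma (in pair_sigma_finite) integrable_pair_measure_bound:
  fixes F :: "'a \<times> 'b \<Rightarrow> 'c::{banach, second_countable_topology}"
  assumes Fm: "F \<in> borel_measurable (M1 \<Otimes>\<^sub>M M2)"
    and g1: "integrable M1 g1" and g2: "integrable M2 g2"
    and b: "\<And>x y. x \<in> space M1 \<Longrightarrow> y \<in> space M2 \<Longrightarrow> norm (F (x,y)) \<le> g1 x * g2 y"
  shows "integrable (M1 \<Otimes>\<^sub>M M2) F"
proof (rule Bochner_Integration.integrable_bound[where f="\<lambda>(x,y). \<bar>g1 x\<bar> * \<bar>g2 y\<bar>"])
  have [measurable]: "g1 \<in> borel_measurable M1" "g2 \<in> borel_measurable M2"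
    using g1 g2 by auto
  show "integrable (M1 \<Otimes>\<^sub>M M2) (\<lambda>(x,y). \<bar>g1 x\<bar> * \<bar>g2 y\<bar>)"
  proof (rule Fubini_integrable)
    show "(\<lambda>(x,y). \<bar>g1 x\<bar> * \<bar>g2 y\<bar>) \<in> borel_measurable (M1 \<Otimes>\<^sub>M M2)" by measurable
    have "(\<lambda>x. \<integral>y. norm ((\<lambda>(x,y). \<bar>g1 x\<bar> * \<bar>g2 y\<bar>) (x,y)) \<partial>M2) = (\<lambda>x. \<bar>g1 x\<bar> * (\<integral>y. \<bar>g2 y\<bar> \<partial>M2))"
      by (simp add: abs_mult)
    then show "integrable M1 (\<lambda>x. \<integral>y. norm ((\<lambda>(x,y). \<bar>g1 x\<bar> * \<bar>g2 y\<bar>) (x,y)) \<partial>M2)"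
      using g1 by simp
    show "AE x in M1. integrable M2 (\<lambda>y. (\<lambda>(x,y). \<bar>g1 x\<bar> * \<bar>g2 y\<bar>) (x,y))"
      using g2 by simp
  qed
  show "AE x in M1 \<Otimes>\<^sub>M M2. norm (F x) \<le> norm ((\<lambda>(x,y). \<bar>g1 x\<bar> * \<bar>g2 y\<bar>) x)"
  proof (rule AE_I2)
    fix p assume "p \<in> space (M1 \<Otimes>\<^sub>M M2)"
    then obtain x y where p: "p = (x,y)" "x \<in> space M1" "y \<in> space M2"
      by (auto simp: space_pair_measure)
    have "g1 x * g2 y \<le> \<bar>g1 x\<bar> * \<bar>g2 y\<bar>" by (metis abs_ge_self abs_mult)
    then show "norm (F p) \<le> norm ((\<lambda>(x,y). \<bar>g1 x\<bar> * \<bar>g2 y\<bar>) p)"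
      using b[OF p(2,3)] p(1) by simp
  qed
qed (fact Fm)

lemma integral_mult_fourier_swap:
  fixes W h :: "real \<Rightarrow> complex"
  assumes W: "integrable lborel W" and h: "integrable lborel h"
  shows "(\<integral>\<omega>. W \<omega> * (\<integral>x. iexp (s * \<omega> * x) * h x \<partial>lborel) \<partial>lborel)
       = (\<integral>x. h x * (\<integral>\<omega>. iexp (s * \<omega> * x) * W \<omega> \<partial>lborel) \<partial>lborel)"
proof -
  have [measurable]: "W \<in> borel_measurable borel" "h \<in> borel_measurable borel"
    using W h by auto
  let ?F = "\<lambda>\<omega> x. W \<omega> * iexp (s * \<omega> * x) * h x"
  have "integrable (lborel \<Otimes>\<^sub>M lborel) (case_prod ?F)"
    by (rule lborel_pair.integrable_pair_measure_bound[of _ "\<lambda>\<omega>. norm (W \<omega>)" "\<lambda>x. norm (h x)"])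
      (use W h in \<open>auto simp: norm_mult\<close>)
  then have "(\<integral>\<omega>. (\<integral>x. ?F \<omega> x \<partial>lborel) \<partial>lborel) = (\<integral>x. (\<integral>\<omega>. ?F \<omega> x \<partial>lborel) \<partial>lborel)"
    by (rule lborel_pair.Fubini_integral[symmetric])
  moreover have "(\<integral>x. ?F \<omega> x \<partial>lborel) = W \<omega> * (\<integral>x. iexp (s * \<omega> * x) * h x \<partial>lborel)" for \<omega>
    by (simp add: mult.assoc)
  moreover have "(\<integral>\<omega>. ?F \<omega> x \<partial>lborel) = h x * (\<integral>\<omega>. iexp (s * \<omega> * x) * W \<omega> \<partial>lborel)" for x
    by (simp add: mult_ac flip: integral_mult_right_zero)
  ultimately show ?thesis by (simp only:)
qed

lemma bounded_vanishing_at_infinity: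
  fixes h :: "real \<Rightarrow> 'b::real_normed_vector"
  assumes c: "continuous_on UNIV h" and t: "(h \<longlongrightarrow> 0) at_infinity"
  obtains B where "\<And>x. norm (h x) \<le> B"
proof -
  have "eventually (\<lambda>x. dist (h x) 0 < 1) at_infinity"
    using t by (rule tendstoD) simp
  then obtain b where b: "\<And>x. b \<le> norm x \<Longrightarrow> norm (h x) < 1"
    by (auto simp: eventually_at_infinity)
  have "compact (h ` cball 0 b)"
    by (rule compact_continuous_image[OF continuous_on_subset[OF c] compact_cball]) auto
  then obtain B' where B': "\<And>y. y \<in> h ` cball 0 b \<Longrightarrow> norm y \<le> B'"
    by (meson bounded_iff compact_imp_bounded)
  have "norm (h x) \<le> max 1 B'" for x
  proof (cases "b \<le> norm x")
    case True then show ?thesis using b[of x] by simp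
  next
    case False then have "x \<in> cball 0 b" by simp
    then show ?thesis using B'[of "h x"] by simp
  qed
  then show ?thesis by (rule that)
qed

lemma
  assumes "C0_1 f"
  shows C0_1_bounded: "\<exists>B. \<forall>x. \<bar>f x\<bar> \<le> B"
    and C0_1_lipschitz: "\<exists>L. L-lipschitz_on UNIV f"
proof -
  obtain f' where d: "\<And>x. (f has_real_derivative f' x) (at x)" and c': "continuous_on UNIV f'"
    and t: "(f \<longlongrightarrow> 0) at_infinity" and t': "(f' \<longlongrightarrow> 0) at_infinity"
    using assms unfolding C0_1_def by blast
  have "continuous_on UNIV f"
    using d by (meson DERIV_isCont continuous_at_imp_continuous_on)
  then show "\<exists>B. \<forall>x. \<bar>f x\<bar> \<le> B"
    using bounded_vanishing_at_infinity[OF _ t] by (metis real_norm_def)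
  obtain L where L: "\<And>x. \<bar>f' x\<bar> \<le> L"
    using bounded_vanishing_at_infinity[OF c' t'] by (metis real_norm_def)
  have mvt: "\<bar>f a - f b\<bar> \<le> L * \<bar>a - b\<bar>" if ba: "b < a" for a b
  proof -
    obtain z where "f a - f b = (a - b) * f' z"
      using MVT2[OF ba, of f f'] d by blast
    then show ?thesis
      using L[of z] ba by (simp add: abs_mult mult.commute mult_left_mono)
  qed
  have "\<bar>f a - f b\<bar> \<le> L * \<bar>a - b\<bar>" for a b
    using mvt[of a b] mvt[of b a] by (cases a b rule: linorder_cases) (simp_all add: abs_minus_commute)
  then have "L-lipschitz_on UNIV f"
    using L[of 0] by (intro lipschitz_onI) (auto simp: dist_real_def)
  then show "\<exists>L. L-lipschitz_on UNIV f" ..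
qed

lemma
  assumes "prob_space M" and d: "distributed M lborel V (\<lambda>v. ennreal (f v))" and "\<And>v. 0 \<le> f v"
  shows integrable_distributed_density: "integrable lborel f"
    and integral_distributed_density: "(\<integral>v. f v \<partial>lborel) = 1"
proof -
  interpret prob_space M by fact
  have "integrable lborel (\<lambda>x. f x * 1) \<longleftrightarrow> integrable M (\<lambda>x. (1::real))"
    by (rule distributed_integrable[OF d]) (use assms in auto)
  then show "integrable lborel f" by simp
  have "(\<integral>x. f x * 1 \<partial>lborel) = (\<integral>x. (1::real) \<partial>M)"
    by (rule distributed_integral[OF d]) (use assms in auto)
  then show "(\<integral>v. f v \<partial>lborel) = 1" by (simp add: prob_space)
qed

lemma char_distr_density:
  assumes d: "distributed M lborel V (\<lambda>v. ennreal (f v))"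
    and nn: "\<And>v. 0 \<le> f v" and fm: "f \<in> borel_measurable borel"
  shows "char (distr M borel V) \<theta> = fourier (\<lambda>v. complex_of_real (f v)) \<theta>"
proof -
  have "distr M borel V = density lborel (\<lambda>v. ennreal (f v))"
    using d by (simp add: distributed_def cong: distr_cong)
  then have "char (distr M borel V) \<theta> = (\<integral>v. iexp (\<theta> * v) \<partial>density lborel (\<lambda>v. ennreal (f v)))"
    unfolding char_def by simp
  also have "\<dots> = (\<integral>v. f v *\<^sub>R iexp (\<theta> * v) \<partial>lborel)"
    by (rule integral_density) (use nn fm in auto)
  finally show ?thesis
    by (simp add: fourier_def scaleR_conv_of_real mult.commute)
qed

lemma integral_abel_fourier:
  fixes l :: "real \<Rightarrow> complex"
  assumes e: "0 < e" and l: "integrable lborel l"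
  shows "(\<integral>\<omega>. iexp (\<omega> * (- z)) * complex_of_real (exp (- (e * \<bar>\<omega>\<bar>))) * fourier l \<omega> \<partial>lborel)
    = complex_of_real (2 * pi) * (\<integral>x. poisson_kernel e (x - z) *\<^sub>R l x \<partial>lborel)"
proof -
  let ?W = "\<lambda>\<omega>. iexp (\<omega> * (- z)) * complex_of_real (exp (- (e * \<bar>\<omega>\<bar>)))"
  have shift: "iexp (1 * \<omega> * x) * ?W \<omega> = iexp (\<omega> * (x - z)) * complex_of_real (exp (- (e * \<bar>\<omega>\<bar>)))" for \<omega> x
  proof -
    have "1 * \<omega> * x + \<omega> * (- z) = \<omega> * (x - z)"
      by (simp add: algebra_simps)
    then show ?thesis
      by (simp only: mult.assoc[symmetric] iexp_add)
  qed
  have "(\<integral>\<omega>. ?W \<omega> * fourier l \<omega> \<partial>lborel) = (\<integral>\<omega>. ?W \<omega> * (\<integral>x. iexp (1 * \<omega> * x) * l x \<partial>lborel) \<partial>lborel)"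
    by (simp add: fourier_def)
  also have "\<dots> = (\<integral>x. l x * (\<integral>\<omega>. iexp (1 * \<omega> * x) * ?W \<omega> \<partial>lborel) \<partial>lborel)"
    by (rule integral_mult_fourier_swap[OF integrable_fourier_exp_neg_abs[OF e] l])
  also have "\<dots> = (\<integral>x. complex_of_real (2 * pi) * (poisson_kernel e (x - z) *\<^sub>R l x) \<partial>lborel)"
    unfolding shift fourier_exp_neg_abs[OF e]
    by (intro Bochner_Integration.integral_cong refl) (simp add: two_pi_poisson_kernel[symmetric] scaleR_conv_of_real)
  also have "\<dots> = complex_of_real (2 * pi) * (\<integral>x. poisson_kernel e (x - z) *\<^sub>R l x \<partial>lborel)"
    by (rule integral_mult_right_zero)
  finally show ?thesis .
qed

section \<open>The principal value Hilbert transform\<close>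

definition hilbert_integral :: "(real \<Rightarrow> real) \<Rightarrow> real \<Rightarrow> real" where
  "hilbert_integral F a = (LINT s:{0<..}|lborel. (F (a - s) - F (a + s)) / s)"

lemma
  assumes F: "set_integrable lborel {0<..} (\<lambda>s. (F (a - s) - F (a + s)) / s)"
    and G: "set_integrable lborel {0<..} (\<lambda>s. (G (a - s) - G (a + s)) / s)"
  shows set_integrable_hilbert_diff:
      "set_integrable lborel {0<..} (\<lambda>s. ((F (a - s) - G (a - s)) - (F (a + s) - G (a + s))) / s)"
    and hilbert_integral_diff:
      "hilbert_integral (\<lambda>x. F x - G x) a = hilbert_integral F a - hilbert_integral G a"
proof -
  have eq: "((F (a - s) - G (a - s)) - (F (a + s) - G (a + s))) / s
      = (F (a - s) - F (a + s)) / s - (G (a - s) - G (a + s)) / s" for s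
    by (simp add: diff_divide_distrib)
  show "set_integrable lborel {0<..} (\<lambda>s. ((F (a - s) - G (a - s)) - (F (a + s) - G (a + s))) / s)"
    unfolding eq using F G by simp
  show "hilbert_integral (\<lambda>x. F x - G x) a = hilbert_integral F a - hilbert_integral G a"
    unfolding hilbert_integral_def eq using F G by simp
qed

lemma truncated_hilbert_eq:
  fixes f :: "real \<Rightarrow> real"
  assumes f: "integrable lborel f" and \<delta>: "0 < \<delta>"
  shows "(LINT t:{t. \<delta> < \<bar>t\<bar>}|lborel. f (y - t) / t) = (\<integral>s. indicator {\<delta><..} s * ((f (y - s) - f (y + s)) / s) \<partial>lborel)"
proof -
  have [measurable]: "f \<in> borel_measurable borel"
    using f by auto
  define G where "G t = indicator {t. \<delta> < \<bar>t\<bar>} t *\<^sub>R (f (y - t) / t)" for t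
  have f_refl: "integrable lborel (\<lambda>t. f (y + (-1) * t))"
    by (rule lborel_integrable_real_affine[OF f]) simp
  have iG: "integrable lborel G"
  proof (rule Bochner_Integration.integrable_bound[OF integrable_mult_right[OF integrable_norm[OF f_refl], of "1 / \<delta>"]])
    show "G \<in> borel_measurable lborel"
      unfolding G_def by measurable
    show "AE t in lborel. norm (G t) \<le> norm (1 / \<delta> * norm (f (y + (-1) * t)))"
    proof (rule AE_I2)
      fix t
      show "norm (G t) \<le> norm (1 / \<delta> * norm (f (y + (-1) * t)))"
      proof (cases "\<delta> < \<bar>t\<bar>")
        case True
        then have "\<bar>f (y - t)\<bar> / \<bar>t\<bar> \<le> \<bar>f (y - t)\<bar> / \<delta>"
          using \<delta> by (intro divide_left_mono) auto
        then show ?thesis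
          using True \<delta> by (simp add: G_def abs_div)
      qed (simp add: G_def)
    qed
  qed
  have "(\<integral>t. G t \<partial>lborel) = (LINT s:{0<..}|lborel. G s + G (- s))"
    by (rule integral_lborel_eq_I0i_sum'[OF iG])
  also have "\<dots> = (\<integral>s. indicator {\<delta><..} s * ((f (y - s) - f (y + s)) / s) \<partial>lborel)"
    unfolding set_lebesgue_integral_def
    by (intro Bochner_Integration.integral_cong refl) (use \<delta> in \<open>auto simp: G_def indicator_def diff_divide_distrib\<close>)
  finally show ?thesis
    by (simp add: G_def set_lebesgue_integral_def)
qed

lemma hilbert_eq_hilbert_integral:
  fixes f :: "real \<Rightarrow> real"
  assumes f: "integrable lborel f"
    and f_hilbert: "set_integrable lborel {0<..} (\<lambda>s. (f (y - s) - f (y + s)) / s)"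
  shows "hilbert f y = hilbert_integral f y / pi"
proof -
  define H where "H = (\<lambda>s. indicator {0<..} s * ((f (y - s) - f (y + s)) / s))"
  have iH: "integrable lborel H"
    using f_hilbert by (simp add: H_def set_integrable_def)
  have "((\<lambda>\<delta>. \<integral>s. indicator {\<delta><..} s * H s \<partial>lborel) \<longlongrightarrow> (\<integral>s. H s \<partial>lborel)) (at_right 0)"
  proof (rule tendsto_at_right_sequentially[where b=1])
    fix S :: "nat \<Rightarrow> real" assume S_lim: "S \<longlonglongrightarrow> 0"
    have "AE s in lborel. (\<lambda>n. indicator {S n<..} s * H s) \<longlonglongrightarrow> H s"
    proof (rule AE_I2)
      fix s :: real
      show "(\<lambda>n. indicator {S n<..} s * H s) \<longlonglongrightarrow> H s"
      proof (cases "0 < s")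
        case True
        have "eventually (\<lambda>n. S n < s) sequentially"
          using order_tendstoD(2)[OF S_lim True] .
        then have "eventually (\<lambda>n. indicator {S n<..} s * H s = H s) sequentially"
          by eventually_elim (simp add: indicator_def)
        then show ?thesis
          by (rule tendsto_eventually)
      qed (simp add: H_def)
    qed
    then show "(\<lambda>n. \<integral>s. indicator {S n<..} s * H s \<partial>lborel) \<longlonglongrightarrow> (\<integral>s. H s \<partial>lborel)"
      using iH by (intro integral_dominated_convergence[where w="\<lambda>s. norm (H s)"]) (auto simp: indicator_def)
  qed simp
  moreover have "\<forall>\<^sub>F \<delta> in at_right 0. (\<integral>s. indicator {\<delta><..} s * H s \<partial>lborel) = (LINT t:{t. \<delta> < \<bar>t\<bar>}|lborel. f (y - t) / t)"
    using eventually_at_right_less[of "0::real"]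
  proof eventually_elim
    case (elim \<delta>)
    then have "indicator {\<delta><..} s * H s = indicator {\<delta><..} s * ((f (y - s) - f (y + s)) / s)" for s
      by (simp add: H_def indicator_def)
    then show ?case
      using truncated_hilbert_eq[OF f elim] by simp
  qed
  ultimately have "((\<lambda>\<delta>. LINT t:{t. \<delta> < \<bar>t\<bar>}|lborel. f (y - t) / t) \<longlongrightarrow> (\<integral>s. H s \<partial>lborel)) (at_right 0)"
    by (rule Lim_transform_eventually)
  then show ?thesis
    unfolding hilbert_def hilbert_integral_def set_lebesgue_integral_def H_def
    by (simp add: tendsto_Lim)
qed

section \<open>Bounded Lipschitz densities\<close>

lemma abs_div_sq_add_sq_le:
  fixes e s :: real assumes e: "0 < e"
  shows "\<bar>s / (e\<^sup>2 + s\<^sup>2)\<bar> \<le> 1 / e"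
proof -
  have "0 \<le> (e - \<bar>s\<bar>)\<^sup>2" by simp
  then have "2 * (\<bar>s\<bar> * e) \<le> e\<^sup>2 + s\<^sup>2"
    by (simp add: power2_eq_square algebra_simps)
  moreover have "0 \<le> \<bar>s\<bar> * e" using e by simp
  ultimately have "\<bar>s\<bar> * e \<le> e\<^sup>2 + s\<^sup>2" by linarith
  then show ?thesis
    using e by (simp add: abs_div field_simps add_pos_nonneg)
qed

locale bounded_lipschitz_density =
  fixes fV :: "real \<Rightarrow> real" and B L :: real
  assumes fV_nonneg: "\<And>v. 0 \<le> fV v"
    and fV_integrable: "integrable lborel fV"
    and fV_integral: "(\<integral>v. fV v \<partial>lborel) = 1"
    and fV_bounded: "\<And>x. \<bar>fV x\<bar> \<le> B"
    and fV_lipschitz: "L-lipschitz_on UNIV fV"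
begin

lemma fV_measurable[measurable]: "fV \<in> borel_measurable borel"
  using fV_integrable by auto

lemma fV_continuous: "continuous_on UNIV fV"
  using lipschitz_on_continuous_on[OF fV_lipschitz] .

lemma L_nonneg: "0 \<le> L"
  using lipschitz_on_nonneg[OF fV_lipschitz] .

lemma B_nonneg: "0 \<le> B"
  using fV_bounded[of 0] fV_nonneg[of 0] by simp

lemma integrable_fV_affine: "c \<noteq> 0 \<Longrightarrow> integrable lborel (\<lambda>s. fV (a + c * s))"
  using lborel_integrable_real_affine[OF fV_integrable] .

lemma integral_fV_affine: "c \<noteq> 0 \<Longrightarrow> (\<integral>s. fV (a + c * s) \<partial>lborel) = 1 / \<bar>c\<bar>"
  using lborel_integral_real_affine[of c fV a] fV_integral by (simp add: field_simps)

definition poisson_smoothing :: "real \<Rightarrow> real \<Rightarrow> real" where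
  "poisson_smoothing e b = (\<integral>v. fV v * poisson_kernel e (b - v) \<partial>lborel)"

lemma poisson_smoothing_measurable[measurable]: "poisson_smoothing e \<in> borel_measurable borel"
  unfolding poisson_smoothing_def by measurable

lemma poisson_smoothing_eq: "poisson_smoothing e b = (\<integral>w. fV (b - w) * poisson_kernel e w \<partial>lborel)"
  using lborel_integral_real_affine[of "-1" "\<lambda>v. fV v * poisson_kernel e (b - v)" b]
  by (simp add: poisson_smoothing_def)

lemma integrable_fV_poisson_kernel:
  assumes e: "0 < e" shows "integrable lborel (\<lambda>w. fV (b - w) * poisson_kernel e w)"
  by (rule Bochner_Integration.integrable_bound[OF integrable_mult_right[OF integrable_poisson_kernel[OF e], of B]])
    (use fV_bounded poisson_kernel_nonneg[OF e] B_nonneg in \<open>auto simp: abs_mult intro!: mult_right_mono\<close>)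

lemma abs_poisson_average_le:
  assumes e: "0 < e" and bound: "\<And>w. \<bar>F w\<bar> \<le> C" and F: "integrable lborel (\<lambda>w. F w * poisson_kernel e w)"
  shows "\<bar>\<integral>w. F w * poisson_kernel e w \<partial>lborel\<bar> \<le> C"
proof -
  have "integrable lborel (\<lambda>w. \<bar>F w\<bar> * poisson_kernel e w)"
    using integrable_abs[OF F] poisson_kernel_nonneg[OF e] by (simp add: abs_mult)
  then have "\<bar>\<integral>w. F w * poisson_kernel e w \<partial>lborel\<bar> \<le> (\<integral>w. C * poisson_kernel e w \<partial>lborel)"
    by (intro order_trans[OF integral_abs_bound integral_mono[OF _ integrable_mult_right[OF integrable_poisson_kernel[OF e]]]])
      (use bound poisson_kernel_nonneg[OF e] in \<open>auto simp: abs_mult intro!: mult_right_mono\<close>)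
  then show ?thesis
    using integral_poisson_kernel[OF e] by simp
qed

lemma poisson_smoothing_bounded: "0 < e \<Longrightarrow> \<bar>poisson_smoothing e b\<bar> \<le> B"
  unfolding poisson_smoothing_eq by (rule abs_poisson_average_le[OF _ fV_bounded integrable_fV_poisson_kernel])

lemma poisson_smoothing_lipschitz:
  assumes e: "0 < e" shows "L-lipschitz_on UNIV (poisson_smoothing e)"
proof (rule lipschitz_onI)
  fix b1 b2 :: real
  have "poisson_smoothing e b1 - poisson_smoothing e b2 = (\<integral>w. (fV (b1 - w) - fV (b2 - w)) * poisson_kernel e w \<partial>lborel)"
    unfolding poisson_smoothing_eq using integrable_fV_poisson_kernel[OF e] by (simp add: left_diff_distrib)
  also have "\<bar>\<dots>\<bar> \<le> L * \<bar>b1 - b2\<bar>"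
    using integrable_fV_poisson_kernel[OF e] lipschitz_onD[OF fV_lipschitz, of "b1 - w" "b2 - w" for w]
    by (intro abs_poisson_average_le[OF e]) (auto simp: dist_real_def left_diff_distrib)
  finally show "dist (poisson_smoothing e b1) (poisson_smoothing e b2) \<le> L * dist b1 b2"
    by (simp add: dist_real_def)
qed (fact L_nonneg)

lemma poisson_smoothing_tendsto:
  assumes "\<And>n. 0 < e n" and "e \<longlonglongrightarrow> 0"
  shows "(\<lambda>n. poisson_smoothing (e n) b) \<longlonglongrightarrow> fV b"
proof -
  have "(\<lambda>n. \<integral>x. poisson_kernel (e n) (x - b) *\<^sub>R fV x \<partial>lborel) \<longlonglongrightarrow> fV b"
    by (rule poisson_kernel_approx_identity[OF fV_measurable _ _ assms])
      (use fV_bounded fV_continuous in \<open>auto simp: continuous_on_eq_continuous_at\<close>)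
  moreover have "poisson_smoothing (e n) b = (\<integral>x. poisson_kernel (e n) (x - b) *\<^sub>R fV x \<partial>lborel)" for n
    unfolding poisson_smoothing_def using poisson_kernel_minus[of "e n" "x - b" for x] by (simp add: mult.commute)
  ultimately show ?thesis by simp
qed

definition phi :: "real \<Rightarrow> complex" where
  "phi = fourier (\<lambda>v. complex_of_real (fV v))"

lemma phi_measurable[measurable]: "phi \<in> borel_measurable borel"
  unfolding phi_def fourier_def by measurable

lemma norm_phi_le_1: "norm (phi \<omega>) \<le> 1"
proof -
  have "norm (phi \<omega>) \<le> (\<integral>v. norm (iexp (\<omega> * v) * complex_of_real (fV v)) \<partial>lborel)"
    unfolding phi_def fourier_def by (rule integral_norm_bound)
  then show ?thesis
    using fV_nonneg fV_integral by (simp add: norm_mult)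
qed

lemma AE_phi_neg_nonzero:
  assumes "AE \<omega> in lborel. phi \<omega> \<noteq> 0"
  shows "AE \<omega> in lborel. phi (- \<omega>) \<noteq> 0"
  using AE_borel_affine[of "-1" "\<lambda>\<omega>. phi \<omega> \<noteq> 0" 0] assms by simp

lemma
  fixes E :: "real \<Rightarrow> complex"
  assumes E: "integrable lborel E"
  shows integrable_modulated_phi: "integrable lborel (\<lambda>\<omega>. iexp (\<omega> * a) * E \<omega> * phi (- \<omega>))"
    and integral_modulated_phi: "(\<integral>\<omega>. iexp (\<omega> * a) * E \<omega> * phi (- \<omega>) \<partial>lborel)
      = (\<integral>v. complex_of_real (fV v) * (\<integral>\<omega>. iexp (\<omega> * (a - v)) * E \<omega> \<partial>lborel) \<partial>lborel)"
proof -
  have [measurable]: "E \<in> borel_measurable borel"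
    using E by auto
  have W: "integrable lborel (\<lambda>\<omega>. iexp (\<omega> * a) * E \<omega>)"
    by (rule Bochner_Integration.integrable_bound[OF integrable_norm[OF E]]) (auto simp: norm_mult)
  show "integrable lborel (\<lambda>\<omega>. iexp (\<omega> * a) * E \<omega> * phi (- \<omega>))"
    by (rule Bochner_Integration.integrable_bound[OF integrable_norm[OF E]])
      (use norm_phi_le_1 in \<open>auto simp: norm_mult intro!: mult_left_le\<close>)
  have "(\<integral>\<omega>. iexp (\<omega> * a) * E \<omega> * phi (- \<omega>) \<partial>lborel)
      = (\<integral>\<omega>. (iexp (\<omega> * a) * E \<omega>) * (\<integral>v. iexp ((-1) * \<omega> * v) * complex_of_real (fV v) \<partial>lborel) \<partial>lborel)"
    by (simp add: phi_def fourier_def)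
  also have "\<dots> = (\<integral>v. complex_of_real (fV v) * (\<integral>\<omega>. iexp ((-1) * \<omega> * v) * (iexp (\<omega> * a) * E \<omega>) \<partial>lborel) \<partial>lborel)"
    using fV_integrable by (intro integral_mult_fourier_swap[OF W]) simp
  also have "\<dots> = (\<integral>v. complex_of_real (fV v) * (\<integral>\<omega>. iexp (\<omega> * (a - v)) * E \<omega> \<partial>lborel) \<partial>lborel)"
  proof -
    have "(-1) * \<omega> * v + \<omega> * a = \<omega> * (a - v)" for \<omega> v :: real
      by (simp add: algebra_simps)
    then have "iexp ((-1) * \<omega> * v) * (iexp (\<omega> * a) * E \<omega>) = iexp (\<omega> * (a - v)) * E \<omega>" for \<omega> v
      by (simp only: mult.assoc[symmetric] iexp_add)
    then show ?thesis by (simp only:)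
  qed
  finally show "(\<integral>\<omega>. iexp (\<omega> * a) * E \<omega> * phi (- \<omega>) \<partial>lborel)
      = (\<integral>v. complex_of_real (fV v) * (\<integral>\<omega>. iexp (\<omega> * (a - v)) * E \<omega> \<partial>lborel) \<partial>lborel)" .
qed

lemma integrable_abel_phi:
  assumes "0 < e"
  shows "integrable lborel (\<lambda>\<omega>. iexp (\<omega> * b) * complex_of_real (exp (- (e * \<bar>\<omega>\<bar>))) * phi (- \<omega>))"
  using integrable_exp_neg_abs[OF assms] by (intro integrable_modulated_phi) simp

lemma integral_abel_phi:
  assumes e: "0 < e"
  shows "(\<integral>\<omega>. iexp (\<omega> * b) * complex_of_real (exp (- (e * \<bar>\<omega>\<bar>))) * phi (- \<omega>) \<partial>lborel)
    = complex_of_real (2 * pi * poisson_smoothing e b)"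
proof -
  have E: "integrable lborel (\<lambda>\<omega>. complex_of_real (exp (- (e * \<bar>\<omega>\<bar>))))"
    using integrable_exp_neg_abs[OF e] by simp
  have "(\<integral>\<omega>. iexp (\<omega> * b) * complex_of_real (exp (- (e * \<bar>\<omega>\<bar>))) * phi (- \<omega>) \<partial>lborel)
      = (\<integral>v. complex_of_real (fV v) * complex_of_real (2 * e / (e\<^sup>2 + (b - v)\<^sup>2)) \<partial>lborel)"
    unfolding integral_modulated_phi[OF E] fourier_exp_neg_abs[OF e] ..
  also have "\<dots> = (\<integral>v. complex_of_real (2 * pi * (fV v * poisson_kernel e (b - v))) \<partial>lborel)"
    by (simp only: of_real_mult[symmetric] two_pi_poisson_kernel[symmetric]) (simp only: mult_ac)
  also have "\<dots> = complex_of_real (2 * pi * poisson_smoothing e b)"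
    unfolding poisson_smoothing_def by (simp only: integral_complex_of_real integral_mult_right_zero)
  finally show ?thesis .
qed

definition conj_poisson :: "real \<Rightarrow> real \<Rightarrow> real" where
  "conj_poisson e a = (\<integral>v. fV v * ((a - v) / (e\<^sup>2 + (a - v)\<^sup>2)) \<partial>lborel)"

lemma integral_abel_sgn_phi:
  assumes e: "0 < e"
  shows "(\<integral>\<omega>. iexp (\<omega> * a) * complex_of_real (exp (- (e * \<bar>\<omega>\<bar>)) * sgn \<omega>) * phi (- \<omega>) \<partial>lborel)
    = \<i> * complex_of_real (2 * conj_poisson e a)"
proof -
  have E: "integrable lborel (\<lambda>\<omega>. complex_of_real (exp (- (e * \<bar>\<omega>\<bar>)) * sgn \<omega>))"
    by (rule Bochner_Integration.integrable_bound[OF integrable_exp_neg_abs[OF e]]) (auto simp: abs_mult sgn_if)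
  have "(\<integral>\<omega>. iexp (\<omega> * a) * complex_of_real (exp (- (e * \<bar>\<omega>\<bar>)) * sgn \<omega>) * phi (- \<omega>) \<partial>lborel)
      = (\<integral>v. complex_of_real (fV v) * (\<i> * complex_of_real (2 * (a - v) / (e\<^sup>2 + (a - v)\<^sup>2))) \<partial>lborel)"
    unfolding integral_modulated_phi[OF E] fourier_exp_neg_abs_sgn[OF e] ..
  also have "\<dots> = (\<integral>v. \<i> * complex_of_real (2 * (fV v * ((a - v) / (e\<^sup>2 + (a - v)\<^sup>2)))) \<partial>lborel)"
    by (intro Bochner_Integration.integral_cong refl) (simp add: mult.left_commute)
  also have "\<dots> = \<i> * complex_of_real (2 * conj_poisson e a)"
    unfolding conj_poisson_def by (simp only: integral_complex_of_real integral_mult_right_zero)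
  finally show ?thesis .
qed

definition hilbert_majorant :: "real \<Rightarrow> real \<Rightarrow> real" where
  "hilbert_majorant a s = indicator {0<..1} s * (2 * L) + indicator {1..} s * (fV (a - s) + fV (a + s))"

lemma hilbert_majorant_nonneg: "0 \<le> hilbert_majorant a s"
  using L_nonneg fV_nonneg[of "a - s"] fV_nonneg[of "a + s"] by (auto simp: hilbert_majorant_def indicator_def)

lemma abs_hilbert_integrand_le:
  assumes s: "0 < s"
  shows "\<bar>(fV (a - s) - fV (a + s)) / s\<bar> \<le> hilbert_majorant a s"
proof (cases "s \<le> 1")
  case True
  have "\<bar>fV (a - s) - fV (a + s)\<bar> \<le> L * \<bar>(a - s) - (a + s)\<bar>"
    using lipschitz_onD[OF fV_lipschitz, of "a - s" "a + s"] by (simp add: dist_real_def)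
  then have "\<bar>fV (a - s) - fV (a + s)\<bar> \<le> 2 * L * s"
    using s by (simp add: mult_ac)
  then have "\<bar>(fV (a - s) - fV (a + s)) / s\<bar> \<le> 2 * L"
    using s by (simp add: abs_div divide_le_eq)
  then show ?thesis
    using True s fV_nonneg[of "a - s"] fV_nonneg[of "a + s"] by (auto simp: hilbert_majorant_def indicator_def)
next
  case False
  have "\<bar>(fV (a - s) - fV (a + s)) / s\<bar> \<le> \<bar>fV (a - s) - fV (a + s)\<bar>"
    using False mult_left_mono[of 1 s "\<bar>fV (a - s) - fV (a + s)\<bar>"] by (simp add: abs_div divide_le_eq)
  also have "\<dots> \<le> fV (a - s) + fV (a + s)"
    using fV_nonneg[of "a - s"] fV_nonneg[of "a + s"] by simp
  finally show ?thesis
    using False L_nonneg by (auto simp: hilbert_majorant_def indicator_def)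
qed

lemma integrable_hilbert_majorant: "integrable lborel (hilbert_majorant a)"
proof -
  have "integrable lborel (\<lambda>s. fV (a - s) + fV (a + s))"
    using integrable_fV_affine[of "-1" a] integrable_fV_affine[of 1 a] by simp
  then show ?thesis
    unfolding hilbert_majorant_def
    using integrable_mult_indicator[of "{1..}" lborel "\<lambda>s. fV (a - s) + fV (a + s)"]
    by (intro Bochner_Integration.integrable_add integrable_mult_left integrable_real_indicator) simp_all
qed

lemma integral_hilbert_majorant_le: "(\<integral>s. hilbert_majorant a s \<partial>lborel) \<le> 2 * L + 2"
proof -
  have fV_sum: "integrable lborel (\<lambda>s. fV (a - s) + fV (a + s))" "(\<integral>s. fV (a - s) + fV (a + s) \<partial>lborel) = 2"
    using integrable_fV_affine[of "-1" a] integrable_fV_affine[of 1 a]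
      integral_fV_affine[of "-1" a] integral_fV_affine[of 1 a] by simp_all
  have ind: "integrable lborel (\<lambda>s::real. indicator {0<..1} s * (2 * L))"
    by (intro integrable_mult_left integrable_real_indicator) simp_all
  have "(\<integral>s. hilbert_majorant a s \<partial>lborel) \<le> (\<integral>s. indicator {0<..1} s * (2 * L) + (fV (a - s) + fV (a + s)) \<partial>lborel)"
    using fV_nonneg[of "a - s" for s] fV_nonneg[of "a + s" for s]
    by (intro integral_mono[OF integrable_hilbert_majorant Bochner_Integration.integrable_add[OF ind fV_sum(1)]])
      (auto simp: hilbert_majorant_def indicator_def)
  also have "\<dots> = 2 * L + 2"
    using fV_sum by (subst Bochner_Integration.integral_add[OF ind]) simp_all
  finally show ?thesis .
qed

lemma set_integrable_hilbert_integrand: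
  "set_integrable lborel {0<..} (\<lambda>s. (fV (a - s) - fV (a + s)) / s)"
  unfolding set_integrable_def
proof (rule Bochner_Integration.integrable_bound[OF integrable_hilbert_majorant])
  show "AE s in lborel. norm (indicator {0<..} s *\<^sub>R ((fV (a - s) - fV (a + s)) / s)) \<le> norm (hilbert_majorant a s)"
    using abs_hilbert_integrand_le hilbert_majorant_nonneg by (auto simp: indicator_def intro!: AE_I2)
qed measurable

lemma conj_poisson_eq:
  assumes e: "0 < e"
  shows "conj_poisson e a = (LINT s:{0<..}|lborel. (fV (a - s) - fV (a + s)) * (s / (e\<^sup>2 + s\<^sup>2)))"
proof -
  let ?G = "\<lambda>s. fV (a - s) * (s / (e\<^sup>2 + s\<^sup>2))"
  have "conj_poisson e a = (\<integral>s. ?G s \<partial>lborel)"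
    using lborel_integral_real_affine[of "-1" "\<lambda>v. fV v * ((a - v) / (e\<^sup>2 + (a - v)\<^sup>2))" a]
    by (simp add: conj_poisson_def)
  have iG: "integrable lborel ?G"
  proof (rule Bochner_Integration.integrable_bound[OF integrable_mult_right[OF integrable_fV_affine[of "-1" a], of "1 / e"]])
    show "AE s in lborel. norm (?G s) \<le> norm (1 / e * fV (a + (-1) * s))"
    proof (rule AE_I2)
      fix s
      have "norm (?G s) = fV (a - s) * \<bar>s / (e\<^sup>2 + s\<^sup>2)\<bar>"
        using fV_nonneg[of "a - s"] by (simp add: abs_mult)
      also have "\<dots> \<le> fV (a - s) * (1 / e)"
        by (rule mult_left_mono[OF abs_div_sq_add_sq_le[OF e] fV_nonneg])
      finally show "norm (?G s) \<le> norm (1 / e * fV (a + (-1) * s))"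
        using e fV_nonneg[of "a - s"] by simp
    qed
  qed measurable
  note fold = integral_lborel_eq_I0i_sum'[OF iG]
  show ?thesis
    unfolding \<open>conj_poisson e a = _\<close> fold
    by (rule set_lebesgue_integral_cong) (auto simp: algebra_simps diff_divide_distrib)
qed

lemma abs_conj_poisson_integrand_le:
  assumes s: "0 < s"
  shows "\<bar>(fV (a - s) - fV (a + s)) * (s / (e\<^sup>2 + s\<^sup>2))\<bar> \<le> hilbert_majorant a s"
proof -
  have "0 < e\<^sup>2 + s\<^sup>2"
    using s by (simp add: add_nonneg_pos)
  then have "s / (e\<^sup>2 + s\<^sup>2) \<le> 1 / s"
    using s by (simp add: field_simps power2_eq_square)
  moreover have "\<bar>(fV (a - s) - fV (a + s)) * (s / (e\<^sup>2 + s\<^sup>2))\<bar> = \<bar>fV (a - s) - fV (a + s)\<bar> * (s / (e\<^sup>2 + s\<^sup>2))"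
    using s by (simp add: abs_mult)
  ultimately have "\<bar>(fV (a - s) - fV (a + s)) * (s / (e\<^sup>2 + s\<^sup>2))\<bar> \<le> \<bar>fV (a - s) - fV (a + s)\<bar> * (1 / s)"
    by (simp only: mult_left_mono abs_ge_zero)
  also have "\<dots> = \<bar>(fV (a - s) - fV (a + s)) / s\<bar>"
    using s by (simp add: abs_div)
  also have "\<dots> \<le> hilbert_majorant a s"
    by (rule abs_hilbert_integrand_le[OF s])
  finally show ?thesis .
qed

lemma conj_poisson_tendsto:
  assumes ep: "\<And>n. 0 < e n" and el: "e \<longlonglongrightarrow> 0"
  shows "(\<lambda>n. conj_poisson (e n) a) \<longlonglongrightarrow> hilbert_integral fV a"
proof -
  let ?f = "\<lambda>s. indicator {0<..} s * ((fV (a - s) - fV (a + s)) / s)"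
  let ?s = "\<lambda>n s. indicator {0<..} s * ((fV (a - s) - fV (a + s)) * (s / ((e n)\<^sup>2 + s\<^sup>2)))"
  have lim: "AE s in lborel. (\<lambda>n. ?s n s) \<longlonglongrightarrow> ?f s"
  proof (rule AE_I2)
    fix s :: real
    show "(\<lambda>n. ?s n s) \<longlonglongrightarrow> ?f s"
    proof (cases "0 < s")
      case True
      have "(\<lambda>n. s / ((e n)\<^sup>2 + s\<^sup>2)) \<longlonglongrightarrow> s / (0\<^sup>2 + s\<^sup>2)"
        using True by (intro tendsto_intros el) simp
      then have "(\<lambda>n. s / ((e n)\<^sup>2 + s\<^sup>2)) \<longlonglongrightarrow> 1 / s"
        using True by (simp add: power2_eq_square)
      then show ?thesis
        using True by (auto intro!: tendsto_intros simp: divide_inverse)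
    qed simp
  qed
  have bound: "AE s in lborel. norm (?s n s) \<le> hilbert_majorant a s" for n
    using abs_conj_poisson_integrand_le[where e="e n" and a=a] hilbert_majorant_nonneg[of a]
    by (intro AE_I2) (auto simp: indicator_def)
  have "(\<lambda>n. \<integral>s. ?s n s \<partial>lborel) \<longlonglongrightarrow> (\<integral>s. ?f s \<partial>lborel)"
    by (rule integral_dominated_convergence[OF _ _ integrable_hilbert_majorant lim bound]) measurable
  then show ?thesis
    using ep by (simp add: conj_poisson_eq hilbert_integral_def set_lebesgue_integral_def)
qed

lemma integrable_fV_shift_measure:
  assumes "finite_measure \<mu>" and sb: "sets \<mu> = sets borel"
  shows "integrable \<mu> (\<lambda>z. fV (x - z))"
proof -
  interpret finite_measure \<mu> by fact
  have "(\<lambda>z. fV (x - z)) \<in> borel_measurable \<mu>"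
    by (subst measurable_cong_sets[OF sb refl]) measurable
  then show ?thesis
    using fV_bounded by (intro integrable_const_bound[where B=B]) auto
qed

lemma integrable_conv_meas:
  assumes fmu: "finite_measure \<mu>" and sb: "sets \<mu> = sets borel"
  shows "integrable lborel (conv_meas fV \<mu>)"
proof -
  interpret mu: finite_measure \<mu> by fact
  interpret P: pair_sigma_finite \<mu> lborel by unfold_locales
  let ?P = "\<lambda>z x. fV (x - z)"
  have Ssets: "sets (\<mu> \<Otimes>\<^sub>M lborel) = sets (borel \<Otimes>\<^sub>M borel)"
    by (rule sets_pair_measure_cong) (simp_all add: sb)
  have mP: "case_prod ?P \<in> borel_measurable (\<mu> \<Otimes>\<^sub>M lborel)"
    unfolding measurable_cong_sets[OF Ssets refl] by measurable
  have one: "(\<integral>x. fV (x - z) \<partial>lborel) = 1" for z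
  proof -
    have "(\<integral>v. fV v \<partial>lborel) = \<bar>1\<bar> *\<^sub>R (\<integral>x. fV (-z + 1 * x) \<partial>lborel)"
      by (rule lborel_integral_real_affine) simp
    then show ?thesis using fV_integral by simp
  qed
  have ix: "integrable lborel (\<lambda>x. fV (x - z))" for z
    using integrable_fV_affine[of 1 "-z"] by simp
  have int: "integrable (\<mu> \<Otimes>\<^sub>M lborel) (case_prod ?P)"
  proof (rule P.Fubini_integrable[OF mP])
    have "(\<lambda>z. \<integral>x. norm (case_prod ?P (z, x)) \<partial>lborel) = (\<lambda>z. 1)"
      using one fV_nonneg by (simp add: fun_eq_iff)
    then show "integrable \<mu> (\<lambda>z. \<integral>x. norm (case_prod ?P (z, x)) \<partial>lborel)" by simp
    show "AE z in \<mu>. integrable lborel (\<lambda>x. case_prod ?P (z, x))" using ix by simp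
  qed
  interpret Q: pair_sigma_finite lborel \<mu> by unfold_locales
  have "integrable (lborel \<Otimes>\<^sub>M \<mu>) (\<lambda>(x, z). ?P z x)"
    using P.integrable_product_swap[OF int] by simp
  from Q.integrable_fst'[OF this] show ?thesis
    unfolding conv_meas_def by simp
qed

lemma integral_weighted_difference_measure:
  fixes w :: "real \<Rightarrow> 'b::{banach, second_countable_topology}"
  assumes fmu: "finite_measure \<mu>" and sb: "sets \<mu> = sets borel"
  shows "(\<integral>z. indicator {0<..} s *\<^sub>R ((fV (y - z - s) - fV (y - z + s)) *\<^sub>R w s) \<partial>\<mu>)
    = indicator {0<..} s *\<^sub>R ((conv_meas fV \<mu> (y - s) - conv_meas fV \<mu> (y + s)) *\<^sub>R w s)"
proof -
  have i1: "integrable \<mu> (\<lambda>z. fV (y - z - s))" and i2: "integrable \<mu> (\<lambda>z. fV (y - z + s))"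
    using integrable_fV_shift_measure[OF fmu sb, of "y - s"] integrable_fV_shift_measure[OF fmu sb, of "y + s"]
    by (simp_all add: algebra_simps)
  have "(\<integral>z. indicator {0<..} s *\<^sub>R ((fV (y - z - s) - fV (y - z + s)) *\<^sub>R w s) \<partial>\<mu>)
      = (\<integral>z. (indicator {0<..} s * (fV (y - z - s) - fV (y - z + s))) *\<^sub>R w s \<partial>\<mu>)"
    by simp
  also have "\<dots> = (\<integral>z. indicator {0<..} s * (fV (y - z - s) - fV (y - z + s)) \<partial>\<mu>) *\<^sub>R w s"
    by (rule integral_scaleR_left) (use i1 i2 in simp)
  also have "\<dots> = indicator {0<..} s *\<^sub>R ((\<integral>z. fV (y - z - s) - fV (y - z + s) \<partial>\<mu>) *\<^sub>R w s)"
    by simp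
  also have "(\<integral>z. fV (y - z - s) - fV (y - z + s) \<partial>\<mu>) = conv_meas fV \<mu> (y - s) - conv_meas fV \<mu> (y + s)"
    using i1 i2 unfolding conv_meas_def by (simp add: algebra_simps)
  finally show ?thesis .
qed

lemma integrable_weighted_difference_pair:
  fixes w :: "real \<Rightarrow> 'b::{banach, second_countable_topology}"
  assumes fmu: "finite_measure \<mu>" and sb: "sets \<mu> = sets borel"
    and wm: "(\<lambda>s. indicator {0<..} s *\<^sub>R w s) \<in> borel_measurable borel"
    and wi: "\<And>a. integrable lborel (\<lambda>s. indicator {0<..} s *\<^sub>R ((fV (a - s) - fV (a + s)) *\<^sub>R w s))"
    and wb: "\<And>a. (\<integral>s. norm (indicator {0<..} s *\<^sub>R ((fV (a - s) - fV (a + s)) *\<^sub>R w s)) \<partial>lborel) \<le> C"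
  shows "integrable (\<mu> \<Otimes>\<^sub>M lborel) (\<lambda>(z, s). indicator {0<..} s *\<^sub>R ((fV (y - z - s) - fV (y - z + s)) *\<^sub>R w s))"
    (is "integrable _ (case_prod ?P)")
proof -
  interpret mu: finite_measure \<mu> by fact
  interpret P: pair_sigma_finite \<mu> lborel by unfold_locales
  have sets_eq: "sets (\<mu> \<Otimes>\<^sub>M lborel) = sets (borel \<Otimes>\<^sub>M borel)"
    by (rule sets_pair_measure_cong) (simp_all add: sb)
  have P_eq: "case_prod ?P = (\<lambda>(z, s). (fV (y - z - s) - fV (y - z + s)) *\<^sub>R (indicator {0<..} s *\<^sub>R w s))"
    by (auto simp: fun_eq_iff)
  have [measurable]: "case_prod ?P \<in> borel_measurable (\<mu> \<Otimes>\<^sub>M lborel)"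
    unfolding measurable_cong_sets[OF sets_eq refl] P_eq using wm by measurable
  then have "(\<lambda>(z, s). norm (?P z s)) \<in> borel_measurable (\<mu> \<Otimes>\<^sub>M lborel)"
    by measurable
  then have norm_measurable: "(\<lambda>z. \<integral>s. norm (?P z s) \<partial>lborel) \<in> borel_measurable \<mu>"
    by measurable
  show ?thesis
  proof (rule P.Fubini_integrable)
    have "norm (\<integral>s. norm (?P z s) \<partial>lborel) \<le> C" for z
      using wb[of "y - z"] by (simp add: integral_nonneg_AE)
    then show "integrable \<mu> (\<lambda>z. \<integral>s. norm (case_prod ?P (z, s)) \<partial>lborel)"
      using norm_measurable by (intro mu.integrable_const_bound[where B=C]) auto
    show "AE z in \<mu>. integrable lborel (\<lambda>s. case_prod ?P (z, s))"
      using wi by simp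
  qed measurable
qed

lemma
  fixes w :: "real \<Rightarrow> 'b::{banach, second_countable_topology}"
  assumes fmu: "finite_measure \<mu>" and sb: "sets \<mu> = sets borel"
    and wm: "(\<lambda>s. indicator {0<..} s *\<^sub>R w s) \<in> borel_measurable borel"
    and wi: "\<And>a. integrable lborel (\<lambda>s. indicator {0<..} s *\<^sub>R ((fV (a - s) - fV (a + s)) *\<^sub>R w s))"
    and wb: "\<And>a. (\<integral>s. norm (indicator {0<..} s *\<^sub>R ((fV (a - s) - fV (a + s)) *\<^sub>R w s)) \<partial>lborel) \<le> C"
  shows integrable_weighted_difference_measure:
      "integrable \<mu> (\<lambda>z. LINT s:{0<..}|lborel. (fV (y - z - s) - fV (y - z + s)) *\<^sub>R w s)"
    and set_integrable_conv_meas_weighted_difference: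
      "set_integrable lborel {0<..} (\<lambda>s. (conv_meas fV \<mu> (y - s) - conv_meas fV \<mu> (y + s)) *\<^sub>R w s)"
    and set_integral_conv_meas_weighted_difference:
      "(LINT s:{0<..}|lborel. (conv_meas fV \<mu> (y - s) - conv_meas fV \<mu> (y + s)) *\<^sub>R w s)
      = (\<integral>z. (LINT s:{0<..}|lborel. (fV (y - z - s) - fV (y - z + s)) *\<^sub>R w s) \<partial>\<mu>)"
proof -
  interpret mu: finite_measure \<mu> by fact
  interpret P: pair_sigma_finite \<mu> lborel by unfold_locales
  interpret Q: pair_sigma_finite lborel \<mu> by unfold_locales
  note int = integrable_weighted_difference_pair[OF fmu sb wm wi wb]
  note inner = integral_weighted_difference_measure[OF fmu sb]
  show "integrable \<mu> (\<lambda>z. LINT s:{0<..}|lborel. (fV (y - z - s) - fV (y - z + s)) *\<^sub>R w s)"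
    using P.integrable_fst'[OF int] unfolding set_lebesgue_integral_def by simp
  have "integrable lborel (\<lambda>s. \<integral>z. indicator {0<..} s *\<^sub>R ((fV (y - z - s) - fV (y - z + s)) *\<^sub>R w s) \<partial>\<mu>)"
    using Q.integrable_fst'[OF P.integrable_product_swap[OF int]] by simp
  then show "set_integrable lborel {0<..} (\<lambda>s. (conv_meas fV \<mu> (y - s) - conv_meas fV \<mu> (y + s)) *\<^sub>R w s)"
    unfolding inner set_integrable_def .
  show "(LINT s:{0<..}|lborel. (conv_meas fV \<mu> (y - s) - conv_meas fV \<mu> (y + s)) *\<^sub>R w s)
      = (\<integral>z. (LINT s:{0<..}|lborel. (fV (y - z - s) - fV (y - z + s)) *\<^sub>R w s) \<partial>\<mu>)"
    using P.Fubini_integral[OF int] unfolding set_lebesgue_integral_def inner[symmetric] by simp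
qed

lemma
  assumes fmu: "finite_measure \<mu>" and sb: "sets \<mu> = sets borel"
  shows integrable_hilbert_integral_measure: "integrable \<mu> (\<lambda>z. hilbert_integral fV (y - z))"
    and set_integrable_hilbert_conv_meas:
      "set_integrable lborel {0<..} (\<lambda>s. (conv_meas fV \<mu> (y - s) - conv_meas fV \<mu> (y + s)) / s)"
    and integral_hilbert_integral_measure:
      "(\<integral>z. hilbert_integral fV (y - z) \<partial>\<mu>) = hilbert_integral (conv_meas fV \<mu>) y"
proof -
  have "(\<lambda>s::real. indicator {0<..} s *\<^sub>R (1 / s)) = (\<lambda>s. indicator {0<..} s * inverse s)"
    by (simp add: fun_eq_iff divide_inverse)
  then have wm: "(\<lambda>s::real. indicator {0<..} s *\<^sub>R (1 / s)) \<in> borel_measurable borel"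
    by simp
  have wi: "integrable lborel (\<lambda>s. indicator {0<..} s *\<^sub>R ((fV (a - s) - fV (a + s)) *\<^sub>R (1 / s)))" for a
    using set_integrable_hilbert_integrand[of a] by (simp add: set_integrable_def)
  have wb: "(\<integral>s. norm (indicator {0<..} s *\<^sub>R ((fV (a - s) - fV (a + s)) *\<^sub>R (1 / s))) \<partial>lborel) \<le> 2 * L + 2" for a
  proof -
    have "(\<integral>s. norm (indicator {0<..} s *\<^sub>R ((fV (a - s) - fV (a + s)) *\<^sub>R (1 / s))) \<partial>lborel)
        \<le> (\<integral>s. hilbert_majorant a s \<partial>lborel)"
      using abs_hilbert_integrand_le[of _ a] hilbert_majorant_nonneg[of a]
      by (intro integral_mono[OF integrable_norm[OF wi] integrable_hilbert_majorant])
        (auto simp: indicator_def divide_inverse mult.commute)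
    then show ?thesis
      using integral_hilbert_majorant_le[of a] by linarith
  qed
  have eq: "hilbert_integral fV (y - z) = (LINT s:{0<..}|lborel. (fV (y - z - s) - fV (y - z + s)) *\<^sub>R (1 / s))" for z
    by (simp add: hilbert_integral_def divide_inverse)
  show "integrable \<mu> (\<lambda>z. hilbert_integral fV (y - z))"
    unfolding eq by (rule integrable_weighted_difference_measure[OF fmu sb wm wi wb])
  show "set_integrable lborel {0<..} (\<lambda>s. (conv_meas fV \<mu> (y - s) - conv_meas fV \<mu> (y + s)) / s)"
    using set_integrable_conv_meas_weighted_difference[OF fmu sb wm wi wb] by (simp add: divide_inverse)
  show "(\<integral>z. hilbert_integral fV (y - z) \<partial>\<mu>) = hilbert_integral (conv_meas fV \<mu>) y"
    unfolding eq set_integral_conv_meas_weighted_difference[OF fmu sb wm wi wb, symmetric]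
    by (simp add: hilbert_integral_def divide_inverse)
qed

end

section \<open>Kernels with min t 1 * norm (k t) integrable\<close>

lemma abs_diff_symmetric_le:
  fixes F :: "real \<Rightarrow> real"
  assumes bounded: "\<And>x. \<bar>F x\<bar> \<le> B" and lipschitz: "L-lipschitz_on UNIV F" and t: "0 < t"
  shows "\<bar>F (a - t) - F (a + t)\<bar> \<le> (2 * L + 2 * B) * min t 1"
proof -
  have L: "0 \<le> L" and B: "0 \<le> B"
    using lipschitz_on_nonneg[OF lipschitz] order_trans[OF abs_ge_zero bounded] by auto
  have "\<bar>F (a - t) - F (a + t)\<bar> \<le> L * \<bar>(a - t) - (a + t)\<bar>"
    using lipschitz_onD[OF lipschitz, of "a - t" "a + t"] by (simp add: dist_real_def)
  moreover have "\<bar>F (a - t) - F (a + t)\<bar> \<le> 2 * B"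
    using bounded[of "a - t"] bounded[of "a + t"] by simp
  ultimately show ?thesis
    using t L B by (cases "t \<le> 1") (auto simp: min_def algebra_simps intro: order_trans)
qed

lemma norm_iexp_neg_minus_iexp_le: "norm (iexp (- x) - iexp x) \<le> 2 * min \<bar>x\<bar> 1"
proof -
  have "iexp (- x) - iexp x = cis (- x) - cis x"
    by (simp only: cis_conv_exp)
  also have "\<dots> = - (\<i> * complex_of_real (2 * sin x))"
    by (simp add: complex_eq_iff)
  finally have "iexp (- x) - iexp x = - (\<i> * complex_of_real (2 * sin x))" .
  then have "norm (iexp (- x) - iexp x) = 2 * \<bar>sin x\<bar>"
    by (simp add: norm_mult)
  then show ?thesis
    using abs_sin_x_le_abs_x[of x] abs_sin_le_one[of x] by simp
qed

lemma exp_neg_abs_mult_le: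
  fixes e w :: real assumes e: "0 < e"
  shows "exp (- (e * \<bar>w\<bar>)) * (\<bar>w\<bar> + 1) \<le> (2 / e + 1) * exp (- (e / 2 * \<bar>w\<bar>))"
proof -
  have "\<bar>w\<bar> = 2 / e * (e * \<bar>w\<bar> / 2)" using e by simp
  also have "\<dots> \<le> 2 / e * exp (e * \<bar>w\<bar> / 2)"
  proof (rule mult_left_mono)
    show "e * \<bar>w\<bar> / 2 \<le> exp (e * \<bar>w\<bar> / 2)"
      using exp_ge_add_one_self[of "e * \<bar>w\<bar> / 2"] by linarith
  qed (use e in simp)
  finally have "exp (- (e * \<bar>w\<bar>)) * \<bar>w\<bar> \<le> exp (- (e * \<bar>w\<bar>)) * (2 / e * exp (e * \<bar>w\<bar> / 2))"
    by (rule mult_left_mono) simp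
  also have "\<dots> = 2 / e * exp (- (e / 2 * \<bar>w\<bar>))"
    by (simp add: exp_add[symmetric])
  finally have "exp (- (e * \<bar>w\<bar>)) * \<bar>w\<bar> \<le> 2 / e * exp (- (e / 2 * \<bar>w\<bar>))" .
  moreover have "exp (- (e * \<bar>w\<bar>)) \<le> exp (- (e / 2 * \<bar>w\<bar>))"
    using e by (simp add: mult_right_mono)
  ultimately have "exp (- (e * \<bar>w\<bar>)) * \<bar>w\<bar> + exp (- (e * \<bar>w\<bar>)) \<le> 2 / e * exp (- (e / 2 * \<bar>w\<bar>)) + exp (- (e / 2 * \<bar>w\<bar>))"
    by (rule add_mono)
  then show ?thesis
    by (simp only: distrib_left distrib_right mult_1_left mult_1_right)
qed

definition kernel_integral :: "(real \<Rightarrow> complex) \<Rightarrow> (real \<Rightarrow> real) \<Rightarrow> real \<Rightarrow> complex" where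
  "kernel_integral k F a = (LINT t:{0<..}|lborel. complex_of_real (F (a - t) - F (a + t)) * k t)"

lemma kernel_integral_diff:
  assumes F: "set_integrable lborel {0<..} (\<lambda>t. complex_of_real (F (a - t) - F (a + t)) * k t)"
    and G: "set_integrable lborel {0<..} (\<lambda>t. complex_of_real (G (a - t) - G (a + t)) * k t)"
  shows "kernel_integral k (\<lambda>x. F x - G x) a = kernel_integral k F a - kernel_integral k G a"
proof -
  have eq: "complex_of_real ((F (a - t) - G (a - t)) - (F (a + t) - G (a + t))) * k t
      = complex_of_real (F (a - t) - F (a + t)) * k t - complex_of_real (G (a - t) - G (a + t)) * k t" for t
    by (simp add: algebra_simps)
  show ?thesis
    unfolding kernel_integral_def eq using F G by simp
qed

locale min1_integrable_kernel =
  fixes k :: "real \<Rightarrow> complex"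
  assumes k_measurable: "set_borel_measurable lborel {0<..} k"
    and k_integrable_0_1: "set_integrable lborel {0<..1} (\<lambda>t. t * cmod (k t))"
    and k_integrable_1_infinity: "set_integrable lborel {1..} (\<lambda>t. cmod (k t))"
begin

lemma indicator_k_measurable[measurable]: "(\<lambda>t. indicator {0<..} t *\<^sub>R k t) \<in> borel_measurable borel"
  using k_measurable unfolding set_borel_measurable_def by simp

definition kernel_majorant :: "real \<Rightarrow> real" where
  "kernel_majorant t = indicator {0<..1} t * (t * cmod (k t)) + indicator {1..} t * cmod (k t)"

lemma integrable_kernel_majorant: "integrable lborel kernel_majorant"
  using k_integrable_0_1 k_integrable_1_infinity
  unfolding kernel_majorant_def set_integrable_def by (simp add: mult.commute)

lemma kernel_majorant_nonneg: "0 \<le> kernel_majorant t"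
  by (auto simp: kernel_majorant_def indicator_def)

lemma kernel_majorant_ge: "0 < t \<Longrightarrow> min t 1 * cmod (k t) \<le> kernel_majorant t"
  by (cases "t \<le> 1") (auto simp: kernel_majorant_def indicator_def min_def)

lemma norm_kernel_integrand_le:
  assumes bounded: "\<And>x. \<bar>F x\<bar> \<le> C" and lipschitz: "K-lipschitz_on UNIV F"
  shows "norm (indicator {0<..} t *\<^sub>R (complex_of_real (F (a - t) - F (a + t)) * k t))
    \<le> (2 * K + 2 * C) * kernel_majorant t"
proof (cases "0 < t")
  case True
  have "norm (indicator {0<..} t *\<^sub>R (complex_of_real (F (a - t) - F (a + t)) * k t))
      = \<bar>F (a - t) - F (a + t)\<bar> * cmod (k t)"
    using True by (simp add: norm_mult del: of_real_diff)
  also have "\<dots> \<le> (2 * K + 2 * C) * min t 1 * cmod (k t)"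
    by (rule mult_right_mono[OF abs_diff_symmetric_le[OF bounded lipschitz True]]) simp
  also have "\<dots> \<le> (2 * K + 2 * C) * kernel_majorant t"
    using kernel_majorant_ge[OF True] lipschitz_on_nonneg[OF lipschitz] order_trans[OF abs_ge_zero bounded]
    by (simp add: mult.assoc mult_left_mono)
  finally show ?thesis .
next
  case False
  then show ?thesis
    using lipschitz_on_nonneg[OF lipschitz] order_trans[OF abs_ge_zero bounded] kernel_majorant_nonneg[of t]
    by simp
qed

lemma kernel_integrand_measurable:
  assumes [measurable]: "F \<in> borel_measurable borel"
  shows "(\<lambda>t. indicator {0<..} t *\<^sub>R (complex_of_real (F (a - t) - F (a + t)) * k t)) \<in> borel_measurable borel"
proof -
  have eq: "(\<lambda>t. indicator {0<..} t *\<^sub>R (complex_of_real (F (a - t) - F (a + t)) * k t))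
      = (\<lambda>t. complex_of_real (F (a - t) - F (a + t)) * (indicator {0<..} t *\<^sub>R k t))"
    by (auto simp: fun_eq_iff)
  show ?thesis
    unfolding eq by measurable
qed

lemma integrable_kernel_integrand:
  assumes "F \<in> borel_measurable borel" and "\<And>x. \<bar>F x\<bar> \<le> C" and "K-lipschitz_on UNIV F"
  shows "integrable lborel (\<lambda>t. indicator {0<..} t *\<^sub>R (complex_of_real (F (a - t) - F (a + t)) * k t))"
proof (rule Bochner_Integration.integrable_bound[OF integrable_mult_right[OF integrable_kernel_majorant]])
  show "(\<lambda>t. indicator {0<..} t *\<^sub>R (complex_of_real (F (a - t) - F (a + t)) * k t)) \<in> borel_measurable lborel"
    using kernel_integrand_measurable[OF assms(1)] by simp
  show "AE t in lborel. norm (indicator {0<..} t *\<^sub>R (complex_of_real (F (a - t) - F (a + t)) * k t))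
      \<le> norm ((2 * K + 2 * C) * kernel_majorant t)"
    using norm_kernel_integrand_le[OF assms(2,3)] by (auto intro!: AE_I2 order_trans[OF _ abs_ge_self])
qed

definition kernel_fourier :: "real \<Rightarrow> complex" where
  "kernel_fourier \<omega> = (LINT t:{0<..}|lborel. (iexp (- \<omega> * t) - iexp (\<omega> * t)) * k t)"

end

locale density_with_kernel = bounded_lipschitz_density + min1_integrable_kernel
begin

lemma norm_abel_kernel_integrand_le:
  assumes e: "0 < e"
  shows "norm (iexp (\<omega> * a) * complex_of_real (exp (- (e * \<bar>\<omega>\<bar>))) * phi (- \<omega>) *
           (indicator {0<..} t *\<^sub>R ((iexp (- \<omega> * t) - iexp (\<omega> * t)) * k t)))
         \<le> 2 * (2 / e + 1) * exp (- (e / 2 * \<bar>\<omega>\<bar>)) * kernel_majorant t"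
proof (cases "0 < t")
  case False
  then show ?thesis
    using e kernel_majorant_nonneg[of t] by simp
next
  case True
  have "norm (iexp (- \<omega> * t) - iexp (\<omega> * t)) \<le> 2 * min (\<bar>\<omega>\<bar> * t) 1"
    using norm_iexp_neg_minus_iexp_le[of "\<omega> * t"] True by (simp add: abs_mult)
  also have "\<dots> \<le> 2 * ((\<bar>\<omega>\<bar> + 1) * min t 1)"
    using True by (auto simp: min_def algebra_simps intro: mult_left_le order_trans[of _ "\<bar>\<omega>\<bar> * t"])
  finally have diff: "norm (iexp (- \<omega> * t) - iexp (\<omega> * t)) \<le> 2 * ((\<bar>\<omega>\<bar> + 1) * min t 1)" .
  have "norm (iexp (\<omega> * a) * complex_of_real (exp (- (e * \<bar>\<omega>\<bar>))) * phi (- \<omega>) *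
           (indicator {0<..} t *\<^sub>R ((iexp (- \<omega> * t) - iexp (\<omega> * t)) * k t)))
      = exp (- (e * \<bar>\<omega>\<bar>)) * norm (phi (- \<omega>)) * (norm (iexp (- \<omega> * t) - iexp (\<omega> * t)) * cmod (k t))"
    using True by (simp add: norm_mult)
  also have "\<dots> \<le> exp (- (e * \<bar>\<omega>\<bar>)) * 1 * (2 * ((\<bar>\<omega>\<bar> + 1) * min t 1) * cmod (k t))"
    using True by (intro mult_mono norm_phi_le_1 diff) auto
  also have "\<dots> = 2 * (exp (- (e * \<bar>\<omega>\<bar>)) * (\<bar>\<omega>\<bar> + 1)) * (min t 1 * cmod (k t))"
    by (simp add: mult_ac)
  also have "\<dots> \<le> 2 * ((2 / e + 1) * exp (- (e / 2 * \<bar>\<omega>\<bar>))) * kernel_majorant t"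
  proof (rule mult_mono)
    show "2 * (exp (- (e * \<bar>\<omega>\<bar>)) * (\<bar>\<omega>\<bar> + 1)) \<le> 2 * ((2 / e + 1) * exp (- (e / 2 * \<bar>\<omega>\<bar>)))"
      using exp_neg_abs_mult_le[OF e, of \<omega>] by simp
  qed (use kernel_majorant_ge[OF True] e True in auto)
  finally show ?thesis
    by (simp only: mult.assoc)
qed

lemma integral_abel_phi_kernel_integrand:
  assumes e: "0 < e"
  shows "(\<integral>\<omega>. iexp (\<omega> * a) * complex_of_real (exp (- (e * \<bar>\<omega>\<bar>))) * phi (- \<omega>) *
      (indicator {0<..} t *\<^sub>R ((iexp (- \<omega> * t) - iexp (\<omega> * t)) * k t)) \<partial>lborel)
    = complex_of_real (2 * pi) *
      (indicator {0<..} t *\<^sub>R (complex_of_real (poisson_smoothing e (a - t) - poisson_smoothing e (a + t)) * k t))"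
    (is "(\<integral>\<omega>. ?F \<omega> \<partial>lborel) = _")
proof -
  let ?H = "\<lambda>b \<omega>. iexp (\<omega> * b) * complex_of_real (exp (- (e * \<bar>\<omega>\<bar>))) * phi (- \<omega>)"
  have pointwise: "?F \<omega> = (indicator {0<..} t *\<^sub>R k t) * (?H (a - t) \<omega> - ?H (a + t) \<omega>)" for \<omega>
  proof -
    have "iexp (\<omega> * a) * iexp (- \<omega> * t) = iexp (\<omega> * (a - t))" "iexp (\<omega> * a) * iexp (\<omega> * t) = iexp (\<omega> * (a + t))"
      by (simp_all only: iexp_add) (simp_all add: algebra_simps)
    then show ?thesis
      unfolding scaleR_conv_of_real by (simp only: ring_distribs mult_ac)
  qed
  have "(\<integral>\<omega>. ?F \<omega> \<partial>lborel) = (indicator {0<..} t *\<^sub>R k t) * (\<integral>\<omega>. ?H (a - t) \<omega> - ?H (a + t) \<omega> \<partial>lborel)"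
    unfolding pointwise by (rule integral_mult_right_zero)
  also have "\<dots> = (indicator {0<..} t *\<^sub>R k t) *
      (complex_of_real (2 * pi * poisson_smoothing e (a - t)) - complex_of_real (2 * pi * poisson_smoothing e (a + t)))"
    by (simp only: Bochner_Integration.integral_diff[OF integrable_abel_phi[OF e] integrable_abel_phi[OF e]]
        integral_abel_phi[OF e])
  finally show ?thesis
    by (simp add: algebra_simps)
qed

lemma
  assumes e: "0 < e"
  shows integrable_abel_phi_kernel_fourier:
      "integrable lborel (\<lambda>\<omega>. iexp (\<omega> * a) * complex_of_real (exp (- (e * \<bar>\<omega>\<bar>))) * phi (- \<omega>) * kernel_fourier \<omega>)"
    and integral_abel_phi_kernel_fourier:
      "(\<integral>\<omega>. iexp (\<omega> * a) * complex_of_real (exp (- (e * \<bar>\<omega>\<bar>))) * phi (- \<omega>) * kernel_fourier \<omega> \<partial>lborel)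
       = complex_of_real (2 * pi) * kernel_integral k (poisson_smoothing e) a"
proof -
  let ?H = "\<lambda>b \<omega>. iexp (\<omega> * b) * complex_of_real (exp (- (e * \<bar>\<omega>\<bar>))) * phi (- \<omega>)"
  let ?F = "\<lambda>\<omega> t. ?H a \<omega> * (indicator {0<..} t *\<^sub>R ((iexp (- \<omega> * t) - iexp (\<omega> * t)) * k t))"
  have int: "integrable (lborel \<Otimes>\<^sub>M lborel) (case_prod ?F)"
  proof (rule lborel_pair.integrable_pair_measure_bound[of _ "\<lambda>\<omega>. 2 * (2 / e + 1) * exp (- (e / 2 * \<bar>\<omega>\<bar>))" kernel_majorant])
    have [measurable]: "(\<lambda>(\<omega>, t). indicator {0<..} t *\<^sub>R k t) \<in> borel_measurable (lborel \<Otimes>\<^sub>M lborel)"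
      by measurable
    have eq: "case_prod ?F = (\<lambda>(\<omega>, t). ?H a \<omega> * ((iexp (- \<omega> * t) - iexp (\<omega> * t)) * (indicator {0<..} t *\<^sub>R k t)))"
      by (auto simp: fun_eq_iff indicator_def)
    show "case_prod ?F \<in> borel_measurable (lborel \<Otimes>\<^sub>M lborel)"
      unfolding eq by measurable
    show "integrable lborel (\<lambda>\<omega>. 2 * (2 / e + 1) * exp (- (e / 2 * \<bar>\<omega>\<bar>)))"
      using integrable_exp_neg_abs[of "e / 2"] e by simp
  qed (use integrable_kernel_majorant norm_abel_kernel_integrand_le[OF e] in auto)
  have inner_t: "(\<integral>t. ?F \<omega> t \<partial>lborel) = ?H a \<omega> * kernel_fourier \<omega>" for \<omega>
    unfolding kernel_fourier_def set_lebesgue_integral_def by (rule integral_mult_right_zero)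
  have "integrable lborel (\<lambda>\<omega>. \<integral>t. ?F \<omega> t \<partial>lborel)"
    using lborel_pair.integrable_fst'[OF int] by (simp only: case_prod_conv)
  then show "integrable lborel (\<lambda>\<omega>. ?H a \<omega> * kernel_fourier \<omega>)"
    unfolding inner_t .
  note inner_\<omega> = integral_abel_phi_kernel_integrand[OF e]
  have "(\<integral>\<omega>. ?H a \<omega> * kernel_fourier \<omega> \<partial>lborel) = (\<integral>\<omega>. (\<integral>t. ?F \<omega> t \<partial>lborel) \<partial>lborel)"
    by (simp only: inner_t)
  also have "\<dots> = (\<integral>t. (\<integral>\<omega>. ?F \<omega> t \<partial>lborel) \<partial>lborel)"
    using lborel_pair.Fubini_integral[OF int] by simp
  also have "\<dots> = complex_of_real (2 * pi) * kernel_integral k (poisson_smoothing e) a"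
    unfolding inner_\<omega> kernel_integral_def set_lebesgue_integral_def by (rule integral_mult_right_zero)
  finally show "(\<integral>\<omega>. ?H a \<omega> * kernel_fourier \<omega> \<partial>lborel) = complex_of_real (2 * pi) * kernel_integral k (poisson_smoothing e) a" .
qed

lemma kernel_integral_poisson_smoothing_tendsto:
  assumes ep: "\<And>n. 0 < e n" and el: "e \<longlonglongrightarrow> 0"
  shows "(\<lambda>n. kernel_integral k (poisson_smoothing (e n)) a) \<longlonglongrightarrow> kernel_integral k fV a"
proof -
  let ?f = "\<lambda>F t. indicator {0<..} t *\<^sub>R (complex_of_real (F (a - t) - F (a + t)) * k t)"
  have "AE t in lborel. (\<lambda>n. ?f (poisson_smoothing (e n)) t) \<longlonglongrightarrow> ?f fV t"
    by (intro AE_I2 tendsto_intros poisson_smoothing_tendsto[OF ep el])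
  moreover have "AE t in lborel. norm (?f (poisson_smoothing (e n)) t) \<le> (2 * L + 2 * B) * kernel_majorant t" for n
    using norm_kernel_integrand_le[OF poisson_smoothing_bounded[OF ep] poisson_smoothing_lipschitz[OF ep]] by simp
  ultimately have "(\<lambda>n. \<integral>t. ?f (poisson_smoothing (e n)) t \<partial>lborel) \<longlonglongrightarrow> (\<integral>t. ?f fV t \<partial>lborel)"
    using integrable_kernel_majorant kernel_integrand_measurable
    by (intro integral_dominated_convergence[where w="\<lambda>t. (2 * L + 2 * B) * kernel_majorant t"]) auto
  then show ?thesis
    by (simp add: kernel_integral_def set_lebesgue_integral_def)
qed

lemma
  assumes fmu: "finite_measure \<mu>" and sb: "sets \<mu> = sets borel"
  shows integrable_kernel_integral_measure: "integrable \<mu> (\<lambda>z. kernel_integral k fV (y - z))"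
    and set_integrable_kernel_conv_meas:
      "set_integrable lborel {0<..} (\<lambda>s. complex_of_real (conv_meas fV \<mu> (y - s) - conv_meas fV \<mu> (y + s)) * k s)"
    and integral_kernel_integral_measure:
      "(\<integral>z. kernel_integral k fV (y - z) \<partial>\<mu>) = kernel_integral k (conv_meas fV \<mu>) y"
proof -
  have wi: "integrable lborel (\<lambda>s. indicator {0<..} s *\<^sub>R ((fV (a - s) - fV (a + s)) *\<^sub>R k s))" for a
    using integrable_kernel_integrand[OF fV_measurable fV_bounded fV_lipschitz, of a] by (simp add: scaleR_conv_of_real)
  have wb: "(\<integral>s. norm (indicator {0<..} s *\<^sub>R ((fV (a - s) - fV (a + s)) *\<^sub>R k s)) \<partial>lborel)
      \<le> (2 * L + 2 * B) * (\<integral>s. kernel_majorant s \<partial>lborel)" for a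
  proof -
    have "(\<integral>s. norm (indicator {0<..} s *\<^sub>R ((fV (a - s) - fV (a + s)) *\<^sub>R k s)) \<partial>lborel)
        \<le> (\<integral>s. (2 * L + 2 * B) * kernel_majorant s \<partial>lborel)"
      using norm_kernel_integrand_le[OF fV_bounded fV_lipschitz, where a=a]
      by (intro integral_mono[OF integrable_norm[OF wi] integrable_mult_right[OF integrable_kernel_majorant]])
        (simp add: scaleR_conv_of_real)
    then show ?thesis
      by simp
  qed
  have eq: "kernel_integral k fV (y - z) = (LINT s:{0<..}|lborel. (fV (y - z - s) - fV (y - z + s)) *\<^sub>R k s)" for z
    by (simp add: kernel_integral_def scaleR_conv_of_real)
  note measure_lemmas = integrable_weighted_difference_measure set_integrable_conv_meas_weighted_difference
    set_integral_conv_meas_weighted_difference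
  note weighted = measure_lemmas[OF fmu sb indicator_k_measurable wi wb]
  show "integrable \<mu> (\<lambda>z. kernel_integral k fV (y - z))"
    unfolding eq by (rule weighted(1))
  show "set_integrable lborel {0<..} (\<lambda>s. complex_of_real (conv_meas fV \<mu> (y - s) - conv_meas fV \<mu> (y + s)) * k s)"
    using weighted(2) by (simp add: scaleR_conv_of_real)
  show "(\<integral>z. kernel_integral k fV (y - z) \<partial>\<mu>) = kernel_integral k (conv_meas fV \<mu>) y"
    unfolding eq weighted(3)[symmetric] by (simp add: kernel_integral_def scaleR_conv_of_real)
qed

lemma AE_fourier_lam_eq:
  assumes char: "char PV = phi" and nonzero: "AE \<omega> in lborel. phi \<omega> \<noteq> 0"
    and Q: "AE \<omega> in lborel. Q g fV PV y \<omega> = iexp (\<omega> * y) * (- \<i> * complex_of_real pi * c * complex_of_real (sgn \<omega>)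
      + (LINT t:{0<..}|lborel. (iexp (- \<omega> * t) - iexp (\<omega> * t)) * k t))"
  shows "AE \<omega> in lborel. fourier (lam g fV y) \<omega>
    = iexp (\<omega> * y) * (- \<i> * complex_of_real pi * c * complex_of_real (sgn \<omega>) + kernel_fourier \<omega>) * phi (- \<omega>)"
  using AE_phi_neg_nonzero[OF nonzero] Q
  by eventually_elim (simp add: Q_def char kernel_fourier_def field_simps)

end

section \<open>The pointwise representation of lambda and its integrated form\<close>

(* l stands for lambda_{g,V,y}; fourier_l_eq is the hypothesis on Q cleared of its denominator. *)
locale fourier_quotient_representation = density_with_kernel +
  fixes l :: "real \<Rightarrow> complex" and c :: complex and y :: real
  assumes l_Xi0: "Xi0 l"
    and fourier_l_integrable: "integrable lborel (fourier l)"
    and fourier_l_eq: "AE \<omega> in lborel. fourier l \<omega> = iexp (\<omega> * y) *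
        (- \<i> * complex_of_real pi * c * complex_of_real (sgn \<omega>) + kernel_fourier \<omega>) * phi (- \<omega>)"
begin

lemma l_integrable: "integrable lborel l"
  using l_Xi0 by (simp add: Xi0_def)

lemma poisson_average_eq:
  assumes e: "0 < e"
  shows "(\<integral>x. poisson_kernel e (x - z) *\<^sub>R l x \<partial>lborel)
    = c * complex_of_real (conj_poisson e (y - z)) + kernel_integral k (poisson_smoothing e) (y - z)"
proof -
  define a where "a = y - z"
  let ?W = "\<lambda>\<omega>. iexp (\<omega> * (- z)) * complex_of_real (exp (- (e * \<bar>\<omega>\<bar>)))"
  let ?T1 = "\<lambda>\<omega>. iexp (\<omega> * a) * complex_of_real (exp (- (e * \<bar>\<omega>\<bar>)) * sgn \<omega>) * phi (- \<omega>)"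
  let ?T2 = "\<lambda>\<omega>. iexp (\<omega> * a) * complex_of_real (exp (- (e * \<bar>\<omega>\<bar>))) * phi (- \<omega>) * kernel_fourier \<omega>"
  have [measurable]: "fourier l \<in> borel_measurable borel"
    using fourier_l_integrable by auto
  have iT1: "integrable lborel ?T1"
    by (rule integrable_modulated_phi)
      (rule Bochner_Integration.integrable_bound[OF integrable_exp_neg_abs[OF e]], auto simp: abs_mult sgn_if)
  have iT2: "integrable lborel ?T2"
    by (rule integrable_abel_phi_kernel_fourier[OF e])
  have iexp_a: "iexp (\<omega> * a) = iexp (\<omega> * (- z)) * iexp (\<omega> * y)" for \<omega>
  proof -
    have "\<omega> * (- z) + \<omega> * y = \<omega> * a"
      by (simp add: a_def algebra_simps)
    then show ?thesis
      by (simp only: iexp_add)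
  qed
  have "AE \<omega> in lborel. ?W \<omega> * fourier l \<omega> = (- \<i> * complex_of_real pi * c) * ?T1 \<omega> + ?T2 \<omega>"
    using fourier_l_eq
  proof eventually_elim
    case (elim \<omega>)
    show ?case
      unfolding elim iexp_a unfolding of_real_mult by algebra
  qed
  then have "(\<integral>\<omega>. ?W \<omega> * fourier l \<omega> \<partial>lborel) = (\<integral>\<omega>. (- \<i> * complex_of_real pi * c) * ?T1 \<omega> + ?T2 \<omega> \<partial>lborel)"
    using iT1 iT2 by (intro integral_cong_AE) auto
  also have "\<dots> = (- \<i> * complex_of_real pi * c) * (\<i> * complex_of_real (2 * conj_poisson e a))
      + complex_of_real (2 * pi) * kernel_integral k (poisson_smoothing e) a"
    by (simp only: Bochner_Integration.integral_add[OF integrable_mult_right[OF iT1] iT2] integral_mult_right_zero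
        integral_abel_sgn_phi[OF e] integral_abel_phi_kernel_fourier[OF e])
  finally have "complex_of_real (2 * pi) * (\<integral>x. poisson_kernel e (x - z) *\<^sub>R l x \<partial>lborel)
      = complex_of_real (2 * pi) * (c * complex_of_real (conj_poisson e a) + kernel_integral k (poisson_smoothing e) a)"
    unfolding integral_abel_fourier[OF e l_integrable] by (simp add: algebra_simps)
  then show ?thesis
    by (simp add: a_def)
qed

lemma l_eq_hilbert_kernel:
  "l z = c * complex_of_real (hilbert_integral fV (y - z)) + kernel_integral k fV (y - z)"
proof -
  define e where "e n = inverse (real (Suc n))" for n
  have e_pos: "\<And>n. 0 < e n"
    by (simp add: e_def)
  have e_lim: "e \<longlonglongrightarrow> 0"
    unfolding e_def by (rule LIMSEQ_inverse_real_of_nat)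
  obtain Bl where "\<And>x. norm (l x) \<le> Bl"
    using l_Xi0 bounded_vanishing_at_infinity unfolding Xi0_def by blast
  then have "(\<lambda>n. \<integral>x. poisson_kernel (e n) (x - z) *\<^sub>R l x \<partial>lborel) \<longlonglongrightarrow> l z"
    using l_Xi0 l_integrable
    by (intro poisson_kernel_approx_identity[OF _ _ _ e_pos e_lim]) (auto simp: Xi0_def continuous_on_eq_continuous_at)
  moreover have "(\<lambda>n. \<integral>x. poisson_kernel (e n) (x - z) *\<^sub>R l x \<partial>lborel)
      \<longlonglongrightarrow> c * complex_of_real (hilbert_integral fV (y - z)) + kernel_integral k fV (y - z)"
    unfolding poisson_average_eq[OF e_pos]
    by (intro tendsto_intros conj_poisson_tendsto[OF e_pos e_lim] kernel_integral_poisson_smoothing_tendsto[OF e_pos e_lim])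
  ultimately show ?thesis
    by (rule LIMSEQ_unique)
qed

lemma integral_l_measure:
  assumes fmu: "finite_measure \<mu>" and sb: "sets \<mu> = sets borel"
  shows "(CLINT x|\<mu>. l x)
    = c * complex_of_real (hilbert_integral (conv_meas fV \<mu>) y) + kernel_integral k (conv_meas fV \<mu>) y"
proof -
  have "(CLINT x|\<mu>. l x) = (CLINT z|\<mu>. c * complex_of_real (hilbert_integral fV (y - z)) + kernel_integral k fV (y - z))"
    by (simp only: l_eq_hilbert_kernel[symmetric])
  also have "\<dots> = c * complex_of_real (\<integral>z. hilbert_integral fV (y - z) \<partial>\<mu>) + (\<integral>z. kernel_integral k fV (y - z) \<partial>\<mu>)"
    using integrable_hilbert_integral_measure[OF fmu sb] integrable_kernel_integral_measure[OF fmu sb] by simp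
  finally show ?thesis
    by (simp only: integral_hilbert_integral_measure[OF fmu sb] integral_kernel_integral_measure[OF fmu sb])
qed

lemma integral_l_measure_diff:
  assumes f1: "finite_measure \<mu>1" and s1: "sets \<mu>1 = sets borel"
    and f2: "finite_measure \<mu>2" and s2: "sets \<mu>2 = sets borel"
  shows "(CLINT x|\<mu>1. l x) - (CLINT x|\<mu>2. l x)
    = complex_of_real pi * c * complex_of_real (hilbert (\<lambda>x. conv_meas fV \<mu>1 x - conv_meas fV \<mu>2 x) y)
      + kernel_integral k (\<lambda>x. conv_meas fV \<mu>1 x - conv_meas fV \<mu>2 x) y"
proof -
  note H = set_integrable_hilbert_conv_meas[OF f1 s1] set_integrable_hilbert_conv_meas[OF f2 s2]
  note K = set_integrable_kernel_conv_meas[OF f1 s1] set_integrable_kernel_conv_meas[OF f2 s2]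
  have "hilbert (\<lambda>x. conv_meas fV \<mu>1 x - conv_meas fV \<mu>2 x) y
      = hilbert_integral (\<lambda>x. conv_meas fV \<mu>1 x - conv_meas fV \<mu>2 x) y / pi"
    using integrable_conv_meas[OF f1 s1] integrable_conv_meas[OF f2 s2] set_integrable_hilbert_diff[OF H]
    by (intro hilbert_eq_hilbert_integral) simp_all
  then have "pi * hilbert (\<lambda>x. conv_meas fV \<mu>1 x - conv_meas fV \<mu>2 x) y
      = hilbert_integral (conv_meas fV \<mu>1) y - hilbert_integral (conv_meas fV \<mu>2) y"
    unfolding hilbert_integral_diff[OF H] by simp
  then have "complex_of_real pi * c * complex_of_real (hilbert (\<lambda>x. conv_meas fV \<mu>1 x - conv_meas fV \<mu>2 x) y)
      = c * complex_of_real (hilbert_integral (conv_meas fV \<mu>1) y) - c * complex_of_real (hilbert_integral (conv_meas fV \<mu>2) y)"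
    by (metis mult.commute mult.left_commute of_real_diff of_real_mult right_diff_distrib)
  then show ?thesis
    unfolding integral_l_measure[OF f1 s1] integral_l_measure[OF f2 s2] kernel_integral_diff[OF K]
    by simp
qed

lemma integral_l_measure_hilbert:
  assumes "finite_measure \<mu>" and "sets \<mu> = sets borel"
  shows "(CLINT x|\<mu>. l x)
    = complex_of_real pi * c * complex_of_real (hilbert (conv_meas fV \<mu>) y) + kernel_integral k (conv_meas fV \<mu>) y"
  using integral_l_measure_diff[OF assms, of "null_measure borel"]
  by (simp add: finite_measureI conv_meas_def[of _ "null_measure borel"])

end

theorem proposition8:
  fixes M :: "'a measure" and X V :: "'a \<Rightarrow> real"
    and fV g :: "real \<Rightarrow> real" and y :: real
    and c :: complex and k :: "real \<Rightarrow> complex"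
  assumes "prob_space M"
    and "X \<in> borel_measurable M" and "V \<in> borel_measurable M"
    and "prob_space.indep_var M borel X borel V"
    and "\<forall>v. 0 \<le> fV v"
    and "distributed M lborel V (\<lambda>v. ennreal (fV v))"
    and "C0_1 fV"
    and "AE \<omega> in lborel. char (distr M borel V) \<omega> \<noteq> 0"
    and "g \<in> borel_measurable borel"
    and "Xi0 (lam g fV y)"
    and "integrable lborel (fourier (lam g fV y))"
    and "set_borel_measurable lborel {0<..} k"
    and "set_integrable lborel {0<..1} (\<lambda>t. t * cmod (k t))"
    and "set_integrable lborel {1..} (\<lambda>t. cmod (k t))"
    and "AE \<omega> in lborel. Q g fV (distr M borel V) y \<omega> =
           iexp (\<omega> * y) * (- \<i> * complex_of_real pi * c * complex_of_real (sgn \<omega>)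
             + (LINT t:{0<..}|lborel. (iexp (- \<omega> * t) - iexp (\<omega> * t)) * k t))"
  shows "(\<forall>\<mu>1 \<mu>2. finite_measure \<mu>1 \<longrightarrow> finite_measure \<mu>2 \<longrightarrow>
             sets \<mu>1 = sets borel \<longrightarrow> sets \<mu>2 = sets borel \<longrightarrow>
             (let f = (\<lambda>x. conv_meas fV \<mu>1 x - conv_meas fV \<mu>2 x) in
               (CLINT x|\<mu>1. lam g fV y x) - (CLINT x|\<mu>2. lam g fV y x)
               = complex_of_real pi * c * complex_of_real (hilbert f y)
                 + (LINT t:{0<..}|lborel. complex_of_real (f (y - t) - f (y + t)) * k t)))
       \<and> (0 < conv_meas fV (distr M borel X) y \<longrightarrow>
           (let fY = conv_meas fV (distr M borel X) in
             complex_of_real (cond_exp_at g fV (distr M borel X) y)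
             = (1 / complex_of_real (fY y)) *
               (complex_of_real pi * c * complex_of_real (hilbert fY y)
                + (LINT t:{0<..}|lborel. complex_of_real (fY (y - t) - fY (y + t)) * k t))))"
proof -
  interpret M: prob_space M by fact
  obtain B where B: "\<And>x. \<bar>fV x\<bar> \<le> B"
    using C0_1_bounded[OF assms(7)] by blast
  obtain L where L: "L-lipschitz_on UNIV fV"
    using C0_1_lipschitz[OF assms(7)] by blast
  interpret density_with_kernel fV B L k
    using integrable_distributed_density[OF assms(1,6)] integral_distributed_density[OF assms(1,6)]
      assms(5,12-14) B L by unfold_locales auto
  have char_V: "char (distr M borel V) = phi"
    using char_distr_density[OF assms(6)] assms(5) fV_measurable by (auto simp: phi_def)
  interpret fourier_quotient_representation fV B L k "lam g fV y" c y
    using assms(10,11) AE_fourier_lam_eq[OF char_V assms(8)[unfolded char_V] assms(15)] by unfold_locales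
  have "finite_measure (distr M borel X)"
    using M.prob_space_distr[OF assms(2)] by (simp add: prob_space.finite_measure)
  moreover have "(CLINT x|distr M borel X. lam g fV y x) = complex_of_real (\<integral>x. g x * fV (y - x) \<partial>distr M borel X)"
    unfolding lam_def by (rule integral_complex_of_real)
  ultimately show ?thesis
    using integral_l_measure_diff integral_l_measure_hilbert[of "distr M borel X"]
    by (auto simp: Let_def kernel_integral_def cond_exp_at_def divide_simps)
qed

end
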